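(* Let $\Sigma$ be a finite group, $A$ a pseudofield, and $\overline A=\operatorname{Fun}L$ with $A\subseteq\overline A$ via the Taylor homomorphism, where $L$ is an algebraic closure of $A/\mathfrak m$ for a maximal ideal $\mathfrak m$ of $A$. If $B$ is a difference closed pseudofield containing $A$ (i.e. with an injective difference homomorphism $A\to B$), then there exists a difference embedding $\overline A\to B$ whose restriction to $A$ is the given embedding $A\to B$.
   Context: A difference ring is a commutative ring with identity with an action of the group $\Sigma$ by ring automorphisms; a difference homomorphism is a unital ring homomorphism commuting with the actions. A pseudofield is an absolutely flat difference ring with no $\Sigma$-stable ideals other than $0$ and itself. $\operatorname{Fun}L$ is the ring of functions $\Sigma\to L$ with pointwise operations and $(\sigma f)(\tau)=f(\sigma^{-1}\tau)$. The Taylor homomorphism of a ring homomorphism $\varphi\colon A\to L$ (here $A\to A/\mathfrak m\to L$) is the difference homomorphism $\Phi\colon A\to\operatorname{Fun}L$, $\Phi(a)(\tau)=\varphi(\tau^{-1}a)$; it is injective here. A pseudofield $A$ is difference closed if for every $n$ and every $\Sigma$-stable ideal $\mathfrak a$ of the difference polynomial ring $A\{y_1,\dots,y_n\}$ (polynomial ring in indeterminates $\sigma y_i$, $\tau(\sigma y_i)=(\tau\sigma)y_i$) the radical of $\mathfrak a$ equals the set of difference polynomials vanishing at every common zero of $\mathfrak a$ in $A^n$ (evaluation via $\sigma y_i\mapsto\sigma(a_i)$). *)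

theory Defs
  imports "HOL-Library.Function_Algebras" "HOL-Library.Poly_Mapping"
          "HOL-Computational_Algebra.Polynomial"
begin

text \<open>The finite group Sigma is a type of class group_add (written additively,
  NOT assumed commutative) and finite.  Actions are maps act :: 's => 'a => 'a.\<close>

definition is_ideal :: "'a::comm_ring_1 set \<Rightarrow> bool" where
  "is_ideal I \<longleftrightarrow> 0 \<in> I \<and> (\<forall>x\<in>I. \<forall>y\<in>I. x + y \<in> I) \<and> (\<forall>r. \<forall>x\<in>I. r * x \<in> I)"

definition maximal_ideal :: "'a::comm_ring_1 set \<Rightarrow> bool" where
  "maximal_ideal M \<longleftrightarrow> is_ideal M \<and> M \<noteq> UNIV \<and>
     (\<forall>J. is_ideal J \<and> M \<subseteq> J \<longrightarrow> J = M \<or> J = UNIV)"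

definition ring_hom :: "('a::comm_ring_1 \<Rightarrow> 'b::comm_ring_1) \<Rightarrow> bool" where
  "ring_hom f \<longleftrightarrow> f 1 = 1 \<and> (\<forall>x y. f (x + y) = f x + f y) \<and> (\<forall>x y. f (x * y) = f x * f y)"

definition difference_ring :: "('s::group_add \<Rightarrow> 'a::comm_ring_1 \<Rightarrow> 'a) \<Rightarrow> bool" where
  "difference_ring act \<longleftrightarrow> act 0 = id \<and> (\<forall>\<sigma> \<tau>. act (\<sigma> + \<tau>) = act \<sigma> \<circ> act \<tau>) \<and>
     (\<forall>\<sigma>. ring_hom (act \<sigma>) \<and> bij (act \<sigma>))"

definition difference_hom ::
  "('s::group_add \<Rightarrow> 'a::comm_ring_1 \<Rightarrow> 'a) \<Rightarrow> ('s \<Rightarrow> 'b::comm_ring_1 \<Rightarrow> 'b) \<Rightarrow> ('a \<Rightarrow> 'b) \<Rightarrow> bool" where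
  "difference_hom actA actB f \<longleftrightarrow> ring_hom f \<and> (\<forall>\<sigma> a. f (actA \<sigma> a) = actB \<sigma> (f a))"

definition stable :: "('s \<Rightarrow> 'a \<Rightarrow> 'a) \<Rightarrow> 'a set \<Rightarrow> bool" where
  "stable act I \<longleftrightarrow> (\<forall>\<sigma>. \<forall>x\<in>I. act \<sigma> x \<in> I)"

definition absolutely_flat :: "'a::comm_ring_1 itself \<Rightarrow> bool" where
  "absolutely_flat _ \<longleftrightarrow> (\<forall>a::'a. \<exists>x. a = a * a * x)"

definition pseudofield :: "('s::group_add \<Rightarrow> 'a::comm_ring_1 \<Rightarrow> 'a) \<Rightarrow> bool" where
  "pseudofield act \<longleftrightarrow> difference_ring act \<and> (0::'a) \<noteq> 1 \<and> absolutely_flat TYPE('a) \<and>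
     (\<forall>I. is_ideal I \<and> stable act I \<longrightarrow> I = {0} \<or> I = UNIV)"

text \<open>Fun L = functions Sigma => L (pointwise ring operations from Function_Algebras),
  with (sigma f)(tau) = f(sigma^-1 tau).\<close>
definition fun_act :: "'s::group_add \<Rightarrow> ('s \<Rightarrow> 'l) \<Rightarrow> ('s \<Rightarrow> 'l)" where
  "fun_act \<sigma> f = (\<lambda>\<tau>. f (- \<sigma> + \<tau>))"

definition taylor :: "('s::group_add \<Rightarrow> 'a \<Rightarrow> 'a) \<Rightarrow> ('a \<Rightarrow> 'l) \<Rightarrow> 'a \<Rightarrow> ('s \<Rightarrow> 'l)" where
  "taylor act \<phi> a = (\<lambda>\<tau>. \<phi> (act (- \<tau>) a))"

text \<open>Difference polynomials: polynomial ring in indeterminates (sigma, i) = sigma y_i.\<close>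
type_synonym ('s, 'a) dpoly = "(('s \<times> nat) \<Rightarrow>\<^sub>0 nat) \<Rightarrow>\<^sub>0 'a"

text \<open>Renaming of monomials: (sigma, i) |-> (tau sigma, i).\<close>
definition mon_shift :: "'s::group_add \<Rightarrow> (('s \<times> nat) \<Rightarrow>\<^sub>0 nat) \<Rightarrow> (('s \<times> nat) \<Rightarrow>\<^sub>0 nat)" where
  "mon_shift \<tau> m = Poly_Mapping.map_key (\<lambda>(\<rho>, i). (- \<tau> + \<rho>, i)) m"

text \<open>Action on difference polynomials: on coefficients via act, on indeterminates by
  tau(sigma y_i) = (tau sigma) y_i.\<close>
definition dpoly_act :: "('s::group_add \<Rightarrow> 'a::comm_ring_1 \<Rightarrow> 'a) \<Rightarrow> 's \<Rightarrow> ('s, 'a) dpoly \<Rightarrow> ('s, 'a) dpoly" where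
  "dpoly_act act \<tau> p = Poly_Mapping.map (act \<tau>) (Poly_Mapping.map_key (mon_shift (- \<tau>)) p)"

definition dpoly_eval :: "('s \<Rightarrow> 'a::comm_ring_1 \<Rightarrow> 'a) \<Rightarrow> (nat \<Rightarrow> 'a) \<Rightarrow> ('s, 'a) dpoly \<Rightarrow> 'a" where
  "dpoly_eval act x p = (\<Sum>m\<in>Poly_Mapping.keys p. Poly_Mapping.lookup p m *
      (\<Prod>v\<in>Poly_Mapping.keys m. act (fst v) (x (snd v)) ^ Poly_Mapping.lookup m v))"

text \<open>The difference polynomial ring A{y_0,...,y_(n-1)} as a subring.\<close>
definition dpolys :: "nat \<Rightarrow> ('s, 'a::comm_ring_1) dpoly set" where
  "dpolys n = {p. \<forall>m\<in>Poly_Mapping.keys p. \<forall>v\<in>Poly_Mapping.keys m. snd v < n}"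

definition is_ideal_in :: "'a::comm_ring_1 set \<Rightarrow> 'a set \<Rightarrow> bool" where
  "is_ideal_in R I \<longleftrightarrow> I \<subseteq> R \<and> 0 \<in> I \<and> (\<forall>x\<in>I. \<forall>y\<in>I. x + y \<in> I) \<and> (\<forall>r\<in>R. \<forall>x\<in>I. r * x \<in> I)"

definition radical_in :: "'a::comm_ring_1 set \<Rightarrow> 'a set \<Rightarrow> 'a set" where
  "radical_in R I = {f\<in>R. \<exists>k. f ^ k \<in> I}"

definition difference_closed :: "('s::{group_add,finite} \<Rightarrow> 'a::comm_ring_1 \<Rightarrow> 'a) \<Rightarrow> bool" where
  "difference_closed act \<longleftrightarrow> pseudofield act \<and>
     (\<forall>n. \<forall>I. is_ideal_in (dpolys n) I \<and> (\<forall>\<tau>. \<forall>f\<in>I. dpoly_act act \<tau> f \<in> I) \<longrightarrow>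
        radical_in (dpolys n) I =
          {f\<in>dpolys n. \<forall>x::nat \<Rightarrow> 'a. (\<forall>i\<ge>n. x i = 0) \<longrightarrow>
              (\<forall>g\<in>I. dpoly_eval act x g = 0) \<longrightarrow> dpoly_eval act x f = 0})"

definition algebraically_closed :: "'l::field itself \<Rightarrow> bool" where
  "algebraically_closed _ \<longleftrightarrow> (\<forall>p::'l poly. degree p > 0 \<longrightarrow> (\<exists>x. poly p x = 0))"

text \<open>L (a field) is an algebraic closure of A/M, the embedding A/M -> L being induced by phi.\<close>
definition algebraic_closure_of_quotient :: "('a::comm_ring_1 \<Rightarrow> 'l::field) \<Rightarrow> 'a set \<Rightarrow> bool" where
  "algebraic_closure_of_quotient \<phi> M \<longleftrightarrow> ring_hom \<phi> \<and> {a. \<phi> a = 0} = M \<and>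
     algebraically_closed TYPE('l) \<and>
     (\<forall>y::'l. \<exists>p. p \<noteq> 0 \<and> (\<forall>i. coeff p i \<in> range \<phi>) \<and> poly p y = 0)"

end

theory Submission
  imports Defs
begin

(* Pick a maximal ideal n of B.  In the absolutely flat ring B the finitely many
   translates rho(n) are maximal with zero intersection, so there is an idempotent sep with
   1 - sep in n and sep in every other translate; then sep*B = B/n is a field.  Difference
   closedness is used twice, through the Nullstellensatz for the difference ideal generated by
   one difference polynomial: it forces the stabiliser of n to be trivial (so the translates of
   sep are orthogonal and sum to 1, i.e. B = Fun(sep*B)), and it makes sep*B algebraically
   closed.  Translating sep we get such an idempotent e with ker(a |-> e*iota(a)) = M.  By Zorn's
   lemma the embedding A/M -> e*B, phi(a) |-> e*iota(a), extends along the algebraic extension L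
   of phi(A) to a field embedding kappa: L -> e*B, and f |-> sum_sigma sigma(kappa(f sigma)) is
   the required difference embedding Fun L -> B. *)

section \<open>Ring homomorphisms and difference rings\<close>

lemma ring_hom_0: "ring_hom f \<Longrightarrow> f 0 = 0"
  unfolding ring_hom_def by (metis add_cancel_right_right add_0)

lemma ring_hom_add: "ring_hom f \<Longrightarrow> f (x + y) = f x + f y"
  unfolding ring_hom_def by blast

lemma ring_hom_mult: "ring_hom f \<Longrightarrow> f (x * y) = f x * f y"
  unfolding ring_hom_def by blast

lemma ring_hom_1: "ring_hom f \<Longrightarrow> f 1 = 1"
  unfolding ring_hom_def by blast

lemma ring_hom_uminus: "ring_hom f \<Longrightarrow> f (- x) = - f x"
  by (metis add.right_inverse add_eq_0_iff ring_hom_0 ring_hom_add)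

lemma ring_hom_diff: "ring_hom f \<Longrightarrow> f (x - y) = f x - f y"
  by (metis diff_conv_add_uminus ring_hom_add ring_hom_uminus)

lemma ring_hom_sum: "ring_hom f \<Longrightarrow> f (sum g S) = (\<Sum>x\<in>S. f (g x))"
  by (induction S rule: infinite_finite_induct) (auto simp: ring_hom_0 ring_hom_add)

lemma ring_hom_power: "ring_hom f \<Longrightarrow> f (x ^ n) = f x ^ n"
  by (induction n) (auto simp: ring_hom_1 ring_hom_mult)

lemma ring_hom_id: "ring_hom id"
  unfolding ring_hom_def by simp

lemma ring_hom_const_poly: "ring_hom (\<lambda>c::'a::comm_ring_1. [:c:])"
  unfolding ring_hom_def by (simp add: one_pCons)

lemma diff_ring_hom: "difference_ring act \<Longrightarrow> ring_hom (act \<sigma>)"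
  unfolding difference_ring_def by blast

lemma diff_ring_0: "difference_ring act \<Longrightarrow> act 0 x = x"
  unfolding difference_ring_def by simp

lemma diff_ring_add: "difference_ring act \<Longrightarrow> act (\<sigma> + \<tau>) x = act \<sigma> (act \<tau> x)"
  unfolding difference_ring_def by (metis comp_apply)

lemma diff_ring_inv_left: "difference_ring act \<Longrightarrow> act (- \<sigma>) (act \<sigma> x) = x"
  by (metis diff_ring_0 diff_ring_add add.left_inverse)

lemma diff_ring_inv_right: "difference_ring act \<Longrightarrow> act \<sigma> (act (- \<sigma>) x) = x"
  by (metis diff_ring_0 diff_ring_add add.right_inverse)

lemma diff_ring_eq_0_iff: "difference_ring act \<Longrightarrow> act \<sigma> x = 0 \<longleftrightarrow> x = 0"
  by (metis diff_ring_hom diff_ring_inv_left ring_hom_0)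

lemma diff_hom_ring_hom: "difference_hom actA actB \<iota> \<Longrightarrow> ring_hom \<iota>"
  unfolding difference_hom_def by blast

lemma diff_hom_commute: "difference_hom actA actB \<iota> \<Longrightarrow> \<iota> (actA \<sigma> a) = actB \<sigma> (\<iota> a)"
  unfolding difference_hom_def by blast

lemma sum_translate:
  fixes g :: "'s::{group_add,finite} \<Rightarrow> 'c::comm_monoid_add"
  shows "(\<Sum>\<rho>\<in>UNIV. g (\<tau> + \<rho>)) = (\<Sum>\<rho>\<in>UNIV. g \<rho>)"
  by (rule sum.reindex_bij_witness[where i="\<lambda>\<rho>. - \<tau> + \<rho>" and j="\<lambda>\<rho>. \<tau> + \<rho>"])
     (simp_all add: add.assoc[symmetric])

lemma sum_translate_right:
  fixes g :: "'s::{group_add,finite} \<Rightarrow> 'c::comm_monoid_add"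
  shows "(\<Sum>\<rho>\<in>UNIV. g (\<rho> + \<tau>)) = (\<Sum>\<rho>\<in>UNIV. g \<rho>)"
  by (rule sum.reindex_bij_witness[where i="\<lambda>\<rho>. \<rho> + - \<tau>" and j="\<lambda>\<rho>. \<rho> + \<tau>"])
     (simp_all add: add.assoc)

lemma sum_single_nonzero:
  fixes g :: "'s::finite \<Rightarrow> 'c::comm_monoid_add"
  assumes "\<And>\<rho>. \<rho> \<noteq> \<sigma> \<Longrightarrow> g \<rho> = 0"
  shows "(\<Sum>\<rho>\<in>UNIV. g \<rho>) = g \<sigma>"
  using assms by (subst sum.remove[of _ \<sigma>]) (auto intro: sum.neutral)


section \<open>Evaluation of polynomials in the poly-mapping representation\<close>

definition monom_val :: "('v \<Rightarrow> 'c::comm_ring_1) \<Rightarrow> ('v \<Rightarrow>\<^sub>0 nat) \<Rightarrow> 'c" where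
  "monom_val val m = (\<Prod>v\<in>Poly_Mapping.keys m. val v ^ Poly_Mapping.lookup m v)"

definition pm_eval ::
  "('a::comm_ring_1 \<Rightarrow> 'c::comm_ring_1) \<Rightarrow> ('v \<Rightarrow> 'c) \<Rightarrow> (('v \<Rightarrow>\<^sub>0 nat) \<Rightarrow>\<^sub>0 'a) \<Rightarrow> 'c" where
  "pm_eval h val p = (\<Sum>m\<in>Poly_Mapping.keys p. h (Poly_Mapping.lookup p m) * monom_val val m)"

lemma monom_val_superset:
  "finite S \<Longrightarrow> Poly_Mapping.keys m \<subseteq> S \<Longrightarrow>
   monom_val val m = (\<Prod>v\<in>S. val v ^ Poly_Mapping.lookup m v)"
  unfolding monom_val_def by (rule prod.mono_neutral_left) (auto simp: in_keys_iff)

lemma monom_val_add: "monom_val val (m1 + m2) = monom_val val m1 * monom_val val m2"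
proof -
  let ?S = "Poly_Mapping.keys m1 \<union> Poly_Mapping.keys m2"
  have "monom_val val (m1 + m2) = (\<Prod>v\<in>?S. val v ^ Poly_Mapping.lookup (m1 + m2) v)"
    using keys_add[of m1 m2] by (intro monom_val_superset) auto
  also have "\<dots> = (\<Prod>v\<in>?S. val v ^ Poly_Mapping.lookup m1 v) *
                  (\<Prod>v\<in>?S. val v ^ Poly_Mapping.lookup m2 v)"
    by (simp add: lookup_add power_add prod.distrib)
  also have "\<dots> = monom_val val m1 * monom_val val m2"
    by (simp add: monom_val_superset[symmetric])
  finally show ?thesis .
qed

lemma monom_val_single: "monom_val val (Poly_Mapping.single v k) = val v ^ k"
  by (cases "k = 0") (auto simp: monom_val_def)

lemma pm_eval_superset:
  "h 0 = 0 \<Longrightarrow> finite S \<Longrightarrow> Poly_Mapping.keys p \<subseteq> S \<Longrightarrow>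
   pm_eval h val p = (\<Sum>m\<in>S. h (Poly_Mapping.lookup p m) * monom_val val m)"
  unfolding pm_eval_def by (rule sum.mono_neutral_left) (auto simp: in_keys_iff)

lemma pm_eval_add:
  assumes "ring_hom h"
  shows "pm_eval h val (p + q) = pm_eval h val p + pm_eval h val q"
proof -
  let ?S = "Poly_Mapping.keys p \<union> Poly_Mapping.keys q"
  note expand = pm_eval_superset[where h=h and S="?S", OF ring_hom_0[OF assms]]
  have "pm_eval h val (p + q) = (\<Sum>m\<in>?S. h (Poly_Mapping.lookup (p + q) m) * monom_val val m)"
    using keys_add[of p q] by (intro expand) auto
  also have "\<dots> = (\<Sum>m\<in>?S. h (Poly_Mapping.lookup p m) * monom_val val m) +
                  (\<Sum>m\<in>?S. h (Poly_Mapping.lookup q m) * monom_val val m)"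
    by (simp add: lookup_add ring_hom_add[OF assms] distrib_right sum.distrib)
  also have "\<dots> = pm_eval h val p + pm_eval h val q"
    by (simp add: expand[of p, symmetric] expand[of q, symmetric])
  finally show ?thesis .
qed

lemma pm_eval_single:
  "h 0 = 0 \<Longrightarrow> pm_eval h val (Poly_Mapping.single m c) = h c * monom_val val m"
  by (cases "c = 0") (auto simp: pm_eval_def)

lemma pm_eval_0: "pm_eval h val 0 = 0"
  by (simp add: pm_eval_def)

lemma pm_eval_sum:
  "ring_hom h \<Longrightarrow> pm_eval h val (sum g S) = (\<Sum>x\<in>S. pm_eval h val (g x))"
  by (induction S rule: infinite_finite_induct) (auto simp: pm_eval_0 pm_eval_add)

lemma poly_mapping_expand:
  "p = (\<Sum>m\<in>Poly_Mapping.keys p. Poly_Mapping.single m (Poly_Mapping.lookup p m))"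
  by (rule poly_mapping_eqI) (auto simp: lookup_sum lookup_single when_def in_keys_iff)

lemma mult_from_terms:
  fixes F :: "('m::comm_monoid_add \<Rightarrow>\<^sub>0 'a::comm_ring_1) \<Rightarrow> 'c::comm_ring_1"
  assumes add: "\<And>p q. F (p + q) = F p + F q"
    and terms: "\<And>m1 m2 a b. F (Poly_Mapping.single m1 a * Poly_Mapping.single m2 b) =
                             F (Poly_Mapping.single m1 a) * F (Poly_Mapping.single m2 b)"
  shows "F (p * q) = F p * F q"
proof -
  have F_sum: "F (sum g S) = (\<Sum>x\<in>S. F (g x))" for g :: "'x \<Rightarrow> _" and S
    using add[of 0 0] by (induction S rule: infinite_finite_induct) (auto simp: add)
  let ?P = "Poly_Mapping.keys p" and ?Q = "Poly_Mapping.keys q"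
  let ?t = "\<lambda>m. Poly_Mapping.single m (Poly_Mapping.lookup p m)"
  let ?s = "\<lambda>m. Poly_Mapping.single m (Poly_Mapping.lookup q m)"
  have "p * q = (\<Sum>m\<in>?P. \<Sum>m'\<in>?Q. ?t m * ?s m')"
    by (subst poly_mapping_expand[of p], subst poly_mapping_expand[of q])
       (simp add: sum_product)
  then have "F (p * q) = (\<Sum>m\<in>?P. \<Sum>m'\<in>?Q. F (?t m) * F (?s m'))"
    by (simp add: F_sum terms)
  also have "\<dots> = F p * F q"
    by (subst (3) poly_mapping_expand[of p], subst (3) poly_mapping_expand[of q])
       (simp add: F_sum sum_product)
  finally show ?thesis .
qed

lemma pm_eval_ring_hom:
  assumes "ring_hom h"
  shows "ring_hom (pm_eval h val)"
proof -
  have "pm_eval h val (p * q) = pm_eval h val p * pm_eval h val q" for p q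
    by (rule mult_from_terms)
       (simp_all add: pm_eval_add[OF assms] mult_single pm_eval_single ring_hom_0[OF assms]
                      ring_hom_mult[OF assms] monom_val_add)
  moreover have "pm_eval h val 1 = 1"
    using pm_eval_single[where h=h and m=0 and c=1 and val=val]
    by (simp flip: single_one add: ring_hom_0[OF assms] ring_hom_1[OF assms] monom_val_def)
  ultimately show ?thesis
    unfolding ring_hom_def by (simp add: pm_eval_add[OF assms])
qed

lemma dpoly_eval_pm_eval: "dpoly_eval act x = pm_eval id (\<lambda>v. act (fst v) (x (snd v)))"
  by (simp add: fun_eq_iff dpoly_eval_def pm_eval_def monom_val_def)


section \<open>Difference polynomials\<close>

lemma mon_shift_lookup:
  "Poly_Mapping.lookup (mon_shift \<tau> m) v = Poly_Mapping.lookup m (- \<tau> + fst v, snd v)"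
proof -
  have "inj (\<lambda>(\<rho>, i). (- \<tau> + \<rho>, i::nat))"
    by (auto simp: inj_def)
  then show ?thesis
    by (cases v) (simp add: mon_shift_def map_key.rep_eq)
qed

lemma mon_shift_comp: "mon_shift \<tau> (mon_shift \<rho> m) = mon_shift (\<tau> + \<rho>) m"
proof (rule poly_mapping_eqI)
  fix k :: "'a \<times> nat"
  have "- \<rho> + (- \<tau> + fst k) = - (\<tau> + \<rho>) + fst k"
    by (simp only: minus_add add.assoc)
  then show "Poly_Mapping.lookup (mon_shift \<tau> (mon_shift \<rho> m)) k =
             Poly_Mapping.lookup (mon_shift (\<tau> + \<rho>) m) k"
    by (simp only: mon_shift_lookup fst_conv snd_conv)
qed

lemma mon_shift_0: "mon_shift 0 m = m"
  by (rule poly_mapping_eqI) (simp add: mon_shift_lookup)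

lemma mon_shift_inverse: "mon_shift (- \<tau>) (mon_shift \<tau> m) = m" "mon_shift \<tau> (mon_shift (- \<tau>) m) = m"
  by (simp_all add: mon_shift_comp mon_shift_0)

lemma mon_shift_add: "mon_shift \<tau> (m1 + m2) = mon_shift \<tau> m1 + mon_shift \<tau> m2"
  by (rule poly_mapping_eqI) (simp add: mon_shift_lookup lookup_add)

lemma mon_shift_zero: "mon_shift \<tau> 0 = 0"
  by (rule poly_mapping_eqI) (simp add: mon_shift_lookup)

lemma mon_shift_single:
  "mon_shift \<tau> (Poly_Mapping.single (a, i) k) = Poly_Mapping.single (\<tau> + a, i) k"
  by (rule poly_mapping_eqI) (auto simp: mon_shift_lookup lookup_single when_def)

lemma dpoly_act_lookup:
  assumes "difference_ring act"
  shows "Poly_Mapping.lookup (dpoly_act act \<tau> p) k =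
         act \<tau> (Poly_Mapping.lookup p (mon_shift (- \<tau>) k))"
proof -
  have "inj (mon_shift (- \<tau>))"
    by (metis injI mon_shift_inverse(2))
  then show ?thesis
    using ring_hom_0[OF diff_ring_hom[OF assms]]
    by (auto simp: dpoly_act_def map.rep_eq map_key.rep_eq when_def)
qed

lemma dpoly_act_single:
  assumes "difference_ring act"
  shows "dpoly_act act \<tau> (Poly_Mapping.single m c) =
         Poly_Mapping.single (mon_shift \<tau> m) (act \<tau> c)"
proof (rule poly_mapping_eqI)
  fix k
  have "m = mon_shift (- \<tau>) k \<longleftrightarrow> mon_shift \<tau> m = k"
    by (metis mon_shift_inverse)
  then show "Poly_Mapping.lookup (dpoly_act act \<tau> (Poly_Mapping.single m c)) k =
             Poly_Mapping.lookup (Poly_Mapping.single (mon_shift \<tau> m) (act \<tau> c)) k"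
    using ring_hom_0[OF diff_ring_hom[OF assms]]
    by (auto simp: dpoly_act_lookup[OF assms] lookup_single when_def)
qed

lemma dpoly_act_ring_hom:
  assumes "difference_ring act"
  shows "ring_hom (dpoly_act act \<tau>)"
proof -
  note hom = diff_ring_hom[OF assms]
  have add: "dpoly_act act \<tau> (p + q) = dpoly_act act \<tau> p + dpoly_act act \<tau> q" for p q
    by (rule poly_mapping_eqI)
       (simp only: dpoly_act_lookup[OF assms] lookup_add ring_hom_add[OF hom])
  have "dpoly_act act \<tau> (p * q) = dpoly_act act \<tau> p * dpoly_act act \<tau> q" for p q
    by (rule mult_from_terms[OF add])
       (simp only: dpoly_act_single[OF assms] mult_single mon_shift_add ring_hom_mult[OF hom])
  moreover have "dpoly_act act \<tau> 1 = 1"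
    using dpoly_act_single[OF assms, of \<tau> 0 1]
    by (simp add: mon_shift_zero ring_hom_1[OF hom])
  ultimately show ?thesis
    unfolding ring_hom_def using add by blast
qed

lemma dpoly_act_add:
  assumes "difference_ring act"
  shows "dpoly_act act \<tau> (dpoly_act act \<rho> p) = dpoly_act act (\<tau> + \<rho>) p"
  by (rule poly_mapping_eqI)
     (simp add: dpoly_act_lookup[OF assms] diff_ring_add[OF assms] mon_shift_comp minus_add)

lemma dpoly_act_0: "difference_ring act \<Longrightarrow> dpoly_act act 0 p = p"
  by (rule poly_mapping_eqI) (simp add: dpoly_act_lookup mon_shift_0 diff_ring_0)

lemma dpolys_add: "p \<in> dpolys n \<Longrightarrow> q \<in> dpolys n \<Longrightarrow> p + q \<in> dpolys n"
  unfolding dpolys_def using keys_add[of p q] by blast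

lemma dpolys_sum: "(\<And>x. x \<in> S \<Longrightarrow> g x \<in> dpolys n) \<Longrightarrow> sum g S \<in> dpolys n"
  by (induction S rule: infinite_finite_induct) (auto simp: dpolys_add, auto simp: dpolys_def)

lemma dpolys_mult:
  assumes "p \<in> dpolys n" "q \<in> dpolys n"
  shows "p * q \<in> dpolys n"
  unfolding dpolys_def
proof (intro CollectI ballI)
  fix m v assume m: "m \<in> Poly_Mapping.keys (p * q)" and v: "v \<in> Poly_Mapping.keys m"
  obtain a b where ab: "m = a + b" "a \<in> Poly_Mapping.keys p" "b \<in> Poly_Mapping.keys q"
    using keys_mult[of p q] m by blast
  have "v \<in> Poly_Mapping.keys a \<or> v \<in> Poly_Mapping.keys b"
    using keys_add[of a b] v ab by blast
  then show "snd v < n"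
    using assms ab unfolding dpolys_def by blast
qed

lemma dpolys_act:
  assumes "difference_ring act" "p \<in> dpolys n"
  shows "dpoly_act act \<tau> p \<in> dpolys n"
  unfolding dpolys_def
proof (intro CollectI ballI)
  fix k v assume k: "k \<in> Poly_Mapping.keys (dpoly_act act \<tau> p)" and v: "v \<in> Poly_Mapping.keys k"
  have "mon_shift (- \<tau>) k \<in> Poly_Mapping.keys p"
    using k ring_hom_0[OF diff_ring_hom[OF assms(1)]]
    by (auto simp: in_keys_iff dpoly_act_lookup[OF assms(1)])
  moreover have "(- \<tau> + fst v, snd v) \<in> Poly_Mapping.keys (mon_shift (- \<tau>) k)"
    using v by (simp add: mon_shift_lookup in_keys_iff)
  ultimately show "snd v < n"
    using assms(2) unfolding dpolys_def by fastforce
qed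

lemma dpolys_single_var0: "Poly_Mapping.single (Poly_Mapping.single (\<sigma>, 0) j) c \<in> dpolys 1"
  unfolding dpolys_def by (simp add: keys_single)

definition dideal_gen :: "('s::{group_add,finite} \<Rightarrow> 'a::comm_ring_1 \<Rightarrow> 'a) \<Rightarrow> ('s, 'a) dpoly \<Rightarrow> ('s, 'a) dpoly set" where
  "dideal_gen act g = {f \<in> dpolys 1. \<exists>h. f = (\<Sum>\<rho>\<in>UNIV. h \<rho> * dpoly_act act \<rho> g)}"

lemma dideal_genI:
  "f \<in> dpolys 1 \<Longrightarrow> f = (\<Sum>\<rho>\<in>UNIV. h \<rho> * dpoly_act act \<rho> g) \<Longrightarrow> f \<in> dideal_gen act g"
  unfolding dideal_gen_def by blast

lemma dideal_gen_is_ideal: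
  fixes act :: "'s::{group_add,finite} \<Rightarrow> 'a::comm_ring_1 \<Rightarrow> 'a"
  assumes "difference_ring act"
  shows "is_ideal_in (dpolys 1) (dideal_gen act g)"
  unfolding is_ideal_in_def
proof (intro conjI ballI)
  show "dideal_gen act g \<subseteq> dpolys 1" "0 \<in> dideal_gen act g"
    unfolding dideal_gen_def dpolys_def by (auto intro!: exI[of _ "\<lambda>_. 0"])
  fix x y assume "x \<in> dideal_gen act g" "y \<in> dideal_gen act g"
  then obtain h h' where "x = (\<Sum>\<rho>\<in>UNIV. h \<rho> * dpoly_act act \<rho> g)"
    "y = (\<Sum>\<rho>\<in>UNIV. h' \<rho> * dpoly_act act \<rho> g)" "x \<in> dpolys 1" "y \<in> dpolys 1"
    unfolding dideal_gen_def by blast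
  then show "x + y \<in> dideal_gen act g"
    unfolding dideal_gen_def
    by (auto simp: dpolys_add sum.distrib distrib_right intro!: exI[of _ "\<lambda>\<rho>. h \<rho> + h' \<rho>"])
next
  fix r x :: "('s, 'a) dpoly" assume "r \<in> dpolys 1" "x \<in> dideal_gen act g"
  then obtain h where x: "x = (\<Sum>\<rho>\<in>UNIV. h \<rho> * dpoly_act act \<rho> g)" "x \<in> dpolys 1"
    and r: "r \<in> dpolys 1"
    unfolding dideal_gen_def by blast
  have "r * x \<in> dpolys 1"
    using dpolys_mult[OF r x(2)] .
  moreover have "r * x = (\<Sum>\<rho>\<in>UNIV. (r * h \<rho>) * dpoly_act act \<rho> g)"
    by (simp add: x(1) sum_distrib_left mult.assoc)
  ultimately show "r * x \<in> dideal_gen act g"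
    by (rule dideal_genI)
qed

lemma dideal_gen_stable:
  assumes "difference_ring act" "f \<in> dideal_gen act g"
  shows "dpoly_act act \<tau> f \<in> dideal_gen act g"
proof -
  obtain h where f: "f = (\<Sum>\<rho>\<in>UNIV. h \<rho> * dpoly_act act \<rho> g)" "f \<in> dpolys 1"
    using assms(2) unfolding dideal_gen_def by blast
  note hom = dpoly_act_ring_hom[OF assms(1)]
  have "dpoly_act act \<tau> f = (\<Sum>\<rho>\<in>UNIV. dpoly_act act \<tau> (h \<rho>) * dpoly_act act (\<tau> + \<rho>) g)"
    by (simp add: f ring_hom_sum[OF hom] ring_hom_mult[OF hom] dpoly_act_add[OF assms(1)])
  also have "\<dots> = (\<Sum>\<rho>\<in>UNIV. dpoly_act act \<tau> (h (- \<tau> + \<rho>)) * dpoly_act act \<rho> g)"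
    using sum_translate[where \<tau>=\<tau> and g="\<lambda>\<rho>. dpoly_act act \<tau> (h (- \<tau> + \<rho>)) * dpoly_act act \<rho> g"]
    by (simp add: add.assoc[symmetric])
  finally have eq: "dpoly_act act \<tau> f =
      (\<Sum>\<rho>\<in>UNIV. dpoly_act act \<tau> (h (- \<tau> + \<rho>)) * dpoly_act act \<rho> g)" .
  have mem: "dpoly_act act \<tau> f \<in> dpolys 1"
    by (rule dpolys_act[OF assms(1) f(2)])
  show ?thesis
    using mem eq by (rule dideal_genI)
qed

lemma dideal_gen_generator:
  assumes "difference_ring act" "g \<in> dpolys 1"
  shows "g \<in> dideal_gen act g"
proof -
  have "(\<Sum>\<rho>\<in>UNIV. (if \<rho> = 0 then 1 else 0) * dpoly_act act \<rho> g) = g"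
    by (subst sum_single_nonzero[where \<sigma>=0]) (simp_all add: dpoly_act_0[OF assms(1)])
  then show ?thesis
    using assms(2) by (intro dideal_genI[where h="\<lambda>\<rho>. if \<rho> = 0 then 1 else 0"]) simp_all
qed

lemma difference_closed_nullstellensatz:
  assumes dc: "difference_closed act" and g: "g \<in> dpolys 1" and f: "f \<in> dpolys 1"
    and vanish: "\<And>x. \<forall>g'\<in>dideal_gen act g. dpoly_eval act x g' = 0 \<Longrightarrow> dpoly_eval act x f = 0"
  shows "\<exists>k h. f ^ k = (\<Sum>\<rho>\<in>UNIV. h \<rho> * dpoly_act act \<rho> g)"
proof -
  have dr: "difference_ring act"
    using dc unfolding difference_closed_def pseudofield_def by blast
  have "f \<in> radical_in (dpolys 1) (dideal_gen act g)"
    using dc dideal_gen_is_ideal[OF dr, of g] dideal_gen_stable[OF dr] f vanish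
    unfolding difference_closed_def by blast
  then show ?thesis
    unfolding radical_in_def dideal_gen_def by blast
qed


section \<open>Ideals\<close>

lemma ideal_0: "is_ideal I \<Longrightarrow> 0 \<in> I"
  unfolding is_ideal_def by blast

lemma ideal_add: "is_ideal I \<Longrightarrow> x \<in> I \<Longrightarrow> y \<in> I \<Longrightarrow> x + y \<in> I"
  unfolding is_ideal_def by blast

lemma ideal_mult_left: "is_ideal I \<Longrightarrow> x \<in> I \<Longrightarrow> r * x \<in> I"
  unfolding is_ideal_def by blast

lemma ideal_mult_right: "is_ideal I \<Longrightarrow> x \<in> I \<Longrightarrow> x * r \<in> I"
  unfolding is_ideal_def by (metis mult.commute)

lemma ideal_diff: "is_ideal I \<Longrightarrow> x \<in> I \<Longrightarrow> y \<in> I \<Longrightarrow> x - y \<in> I"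
  using ideal_add[of I x "- y"] ideal_mult_left[of I y "- 1"] by simp

lemma ideal_UNIV: "is_ideal I \<Longrightarrow> 1 \<in> I \<Longrightarrow> I = UNIV"
  using ideal_mult_left[of I 1] by auto

lemma ideal_sum: "is_ideal I \<Longrightarrow> (\<And>x. x \<in> S \<Longrightarrow> g x \<in> I) \<Longrightarrow> sum g S \<in> I"
  by (induction S rule: infinite_finite_induct) (auto simp: ideal_0 ideal_add)

lemma ideal_preimage: "is_ideal I \<Longrightarrow> ring_hom f \<Longrightarrow> is_ideal {a. f a \<in> I}"
  unfolding is_ideal_def by (auto simp: ring_hom_0 ring_hom_add ring_hom_mult)

lemma maximal_ideal_is_ideal: "maximal_ideal M \<Longrightarrow> is_ideal M"
  unfolding maximal_ideal_def by blast

lemma maximal_ideal_1: "maximal_ideal M \<Longrightarrow> 1 \<notin> M"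
  unfolding maximal_ideal_def using ideal_UNIV by blast

lemma chain_of_proper_ideals:
  assumes C: "C \<in> chains {I. is_ideal I \<and> 1 \<notin> I}" and ne: "C \<noteq> {}"
  shows "is_ideal (\<Union>C) \<and> 1 \<notin> \<Union>C"
proof -
  have sub: "\<And>I. I \<in> C \<Longrightarrow> is_ideal I \<and> 1 \<notin> I"
    using chainsD2[OF C] by blast
  have "x + y \<in> \<Union>C" if xy: "x \<in> \<Union>C" "y \<in> \<Union>C" for x y
  proof -
    obtain X Y where XY: "X \<in> C" "Y \<in> C" "x \<in> X" "y \<in> Y"
      using xy by blast
    from chainsD[OF C XY(1,2)] show ?thesis
      using XY sub ideal_add by blast
  qed
  then show ?thesis
    unfolding is_ideal_def using ne sub ideal_0 ideal_mult_left by blast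
qed

lemma maximal_ideal_exists:
  assumes "(0::'a::comm_ring_1) \<noteq> 1"
  shows "\<exists>M::'a set. maximal_ideal M"
proof -
  let ?S = "{I::'a set. is_ideal I \<and> 1 \<notin> I}"
  have "\<exists>M\<in>?S. \<forall>X\<in>?S. M \<subseteq> X \<longrightarrow> X = M"
  proof (rule Zorn_Lemma2, intro ballI)
    fix C assume C: "C \<in> chains ?S"
    show "\<exists>U\<in>?S. \<forall>X\<in>C. X \<subseteq> U"
    proof (cases "C = {}")
      case True
      have "is_ideal {0::'a}"
        unfolding is_ideal_def by simp
      with True assms show ?thesis by auto
    next
      case False
      then show ?thesis
        using chain_of_proper_ideals[OF C] by blast
    qed
  qed
  then obtain M where M: "is_ideal M" "1 \<notin> M" and max: "\<forall>X\<in>?S. M \<subseteq> X \<longrightarrow> X = M"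
    by blast
  then have "maximal_ideal M"
    unfolding maximal_ideal_def using ideal_UNIV by blast
  then show ?thesis by blast
qed

lemma maximal_ideal_inverse:
  assumes M: "maximal_ideal M" and a: "a \<notin> M"
  shows "\<exists>r. 1 - r * a \<in> M"
proof -
  have I: "is_ideal M"
    using M by (rule maximal_ideal_is_ideal)
  let ?J = "{m + r * a |m r. m \<in> M}"
  have "is_ideal ?J"
    unfolding is_ideal_def
  proof (intro conjI ballI allI)
    show "0 \<in> ?J"
      using ideal_0[OF I] by (intro CollectI exI[of _ 0] exI[of _ 0]) simp
    fix x y assume "x \<in> ?J" "y \<in> ?J"
    then obtain m r m' r' where "x = m + r * a" "y = m' + r' * a" "m \<in> M" "m' \<in> M"
      by blast
    then show "x + y \<in> ?J"
      by (intro CollectI exI[of _ "m + m'"] exI[of _ "r + r'"])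
         (simp add: algebra_simps ideal_add[OF I])
  next
    fix s x assume "x \<in> ?J"
    then obtain m r where "x = m + r * a" "m \<in> M"
      by blast
    then have "s * x = s * m + (s * r) * a" "s * m \<in> M"
      by (simp_all add: algebra_simps ideal_mult_right[OF I])
    then show "s * x \<in> ?J"
      by blast
  qed
  moreover have "M \<subseteq> ?J"
  proof
    fix x assume "x \<in> M"
    then show "x \<in> ?J"
      by (intro CollectI exI[of _ x] exI[of _ 0]) simp
  qed
  moreover have "a \<in> ?J"
    using ideal_0[OF I] by (intro CollectI exI[of _ 0] exI[of _ 1]) simp
  ultimately have "?J = UNIV"
    using M a unfolding maximal_ideal_def by blast
  then obtain m r where "1 = m + r * a" "m \<in> M"
    by blast
  then show ?thesis
    by (metis add_diff_cancel_right')
qed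

lemma maximal_ideal_prime:
  assumes M: "maximal_ideal M" and ab: "a * b \<in> M" and a: "a \<notin> M"
  shows "b \<in> M"
proof -
  obtain r where r: "1 - r * a \<in> M"
    using maximal_ideal_inverse[OF M a] by blast
  have I: "is_ideal M"
    using M by (rule maximal_ideal_is_ideal)
  have "b = (1 - r * a) * b + r * (a * b)"
    by (simp add: algebra_simps)
  also have "\<dots> \<in> M"
    using ideal_add[OF I ideal_mult_right[OF I r] ideal_mult_left[OF I ab]] .
  finally show ?thesis .
qed


section \<open>Pseudofields and their maximal ideals\<close>

lemma pseudofield_diff_ring: "pseudofield act \<Longrightarrow> difference_ring act"
  unfolding pseudofield_def by blast

lemma pseudofield_flat: "pseudofield (act :: _ \<Rightarrow> 'a::comm_ring_1 \<Rightarrow> 'a) \<Longrightarrow> \<exists>x. (a::'a) = a * a * x"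
  unfolding pseudofield_def absolutely_flat_def by blast

lemma pseudofield_nontrivial: "pseudofield (act :: _ \<Rightarrow> 'a::comm_ring_1 \<Rightarrow> 'a) \<Longrightarrow> (0::'a) \<noteq> 1"
  unfolding pseudofield_def by blast

lemma pseudofield_simple: "pseudofield act \<Longrightarrow> is_ideal I \<Longrightarrow> stable act I \<Longrightarrow> 1 \<notin> I \<Longrightarrow> I = {0}"
  unfolding pseudofield_def by blast

lemma flat_idempotent_mod_maximal:
  assumes n: "maximal_ideal n" and a: "a = a * a * x" "a \<notin> n"
  shows "(a * x) * (a * x) = a * x" "1 - a * x \<in> n"
proof -
  show idem: "(a * x) * (a * x) = a * x"
    by (metis a(1) mult.assoc mult.left_commute)
  have "a * x \<notin> n"
  proof
    assume "a * x \<in> n"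
    then have "a * (a * x) \<in> n"
      using maximal_ideal_is_ideal[OF n] ideal_mult_left by blast
    then show False
      using a by (simp add: mult.assoc)
  qed
  moreover have "(a * x) * (1 - a * x) \<in> n"
    using idem ideal_0[OF maximal_ideal_is_ideal[OF n]] by (simp add: algebra_simps)
  ultimately show "1 - a * x \<in> n"
    using maximal_ideal_prime[OF n] by blast
qed

text \<open>Throughout this section \<open>n\<close> is a maximal ideal of the pseudofield \<open>B\<close> (with
  action \<open>act\<close>), and \<open>transl \<rho>\<close> is its translate \<open>\<rho>(n)\<close>.\<close>

locale pseudofield_max =
  fixes act :: "'s::{group_add,finite} \<Rightarrow> 'b::comm_ring_1 \<Rightarrow> 'b" and n :: "'b set"
  assumes pf: "pseudofield act" and max: "maximal_ideal n"
begin

lemma dr: "difference_ring act"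
  using pf by (rule pseudofield_diff_ring)

lemma hom: "ring_hom (act \<sigma>)"
  by (rule diff_ring_hom[OF dr])

lemma n_ideal: "is_ideal n"
  using max by (rule maximal_ideal_is_ideal)

definition transl :: "'s \<Rightarrow> 'b set" where
  "transl \<rho> = {b. act (- \<rho>) b \<in> n}"

lemma transl_ideal: "is_ideal (transl \<rho>)"
  unfolding transl_def by (rule ideal_preimage[OF n_ideal hom])

lemma transl_1: "1 \<notin> transl \<rho>"
  unfolding transl_def using maximal_ideal_1[OF max] by (simp add: ring_hom_1[OF hom])

lemma transl_0: "transl 0 = n"
  unfolding transl_def by (simp add: diff_ring_0[OF dr])

lemma transl_act_iff: "act \<sigma> x \<in> transl \<rho> \<longleftrightarrow> x \<in> transl (- \<sigma> + \<rho>)"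
proof -
  have "act (- \<rho>) (act \<sigma> x) = act (- (- \<sigma> + \<rho>)) x"
    by (simp add: diff_ring_add[OF dr, symmetric] minus_add)
  then show ?thesis
    unfolding transl_def by simp
qed

lemma transl_cong:
  assumes "transl \<rho> = transl \<rho>'"
  shows "transl (\<sigma> + \<rho>) = transl (\<sigma> + \<rho>')"
proof -
  have "x \<in> transl (\<sigma> + r) \<longleftrightarrow> act (- \<sigma>) x \<in> transl r" for x r
    using transl_act_iff[of "- \<sigma>" x r] by simp
  then show ?thesis
    using assms by blast
qed

lemma transl_maximal: "maximal_ideal (transl \<rho>)"
  unfolding maximal_ideal_def
proof (intro conjI allI impI)
  show "is_ideal (transl \<rho>)" "transl \<rho> \<noteq> UNIV"
    using transl_ideal transl_1 by blast+
  fix J assume J: "is_ideal J \<and> transl \<rho> \<subseteq> J"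
  let ?J' = "{b. act \<rho> b \<in> J}"
  have "n \<subseteq> ?J'"
    using J unfolding transl_def by (auto simp: diff_ring_inv_left[OF dr])
  then have "?J' = n \<or> ?J' = UNIV"
    using max ideal_preimage[OF _ hom, of J] J unfolding maximal_ideal_def by blast
  then show "J = transl \<rho> \<or> J = UNIV"
  proof
    assume "?J' = n"
    then have "J \<subseteq> transl \<rho>"
      unfolding transl_def by (auto simp: diff_ring_inv_right[OF dr])
    then show ?thesis
      using J by blast
  next
    assume "?J' = UNIV"
    then have "1 \<in> J"
      using ring_hom_1[OF hom] by (metis UNIV_I mem_Collect_eq)
    then show ?thesis
      using J ideal_UNIV by blast
  qed
qed

text \<open>Since the intersection of the translates is a \<open>\<Sigma>\<close>-stable proper ideal, it is zero.\<close>

lemma transl_inter: "(\<And>\<rho>. x \<in> transl \<rho>) \<Longrightarrow> x = 0"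
proof -
  let ?Z = "{b. \<forall>\<rho>. b \<in> transl \<rho>}"
  have "is_ideal ?Z"
    unfolding is_ideal_def using transl_ideal by (auto simp: ideal_0 ideal_add ideal_mult_left)
  moreover have "stable act ?Z"
    unfolding stable_def by (simp add: transl_act_iff)
  moreover have "1 \<notin> ?Z"
    using transl_1 by blast
  ultimately have "?Z = {0}"
    using pseudofield_simple[OF pf] by blast
  then show "(\<And>\<rho>. x \<in> transl \<rho>) \<Longrightarrow> x = 0"
    by blast
qed

text \<open>A proper prime ideal of the pseudofield contains, hence equals, some translate of
  \<open>n\<close>: otherwise a product of elements \<open>m\<^sub>\<rho> \<in> transl \<rho> - P\<close> would lie in \<open>\<Inter>\<^sub>\<rho> transl \<rho> = 0\<close>.\<close>

lemma prime_ideal_is_transl: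
  assumes P: "is_ideal P" "1 \<notin> P" and prime: "\<And>a b. a * b \<in> P \<Longrightarrow> a \<in> P \<or> b \<in> P"
  shows "\<exists>\<rho>. P = transl \<rho>"
proof -
  have "\<exists>\<rho>. transl \<rho> \<subseteq> P"
  proof (rule ccontr)
    assume "\<nexists>\<rho>. transl \<rho> \<subseteq> P"
    then have "\<forall>\<rho>. \<exists>m. m \<in> transl \<rho> \<and> m \<notin> P"
      by blast
    then obtain m where m: "\<And>\<rho>. m \<rho> \<in> transl \<rho>" "\<And>\<rho>. m \<rho> \<notin> P"
      by metis
    have prod_notin: "(\<Prod>\<rho>\<in>S. m \<rho>) \<notin> P" for S
      using finite[of S]
    proof (induction S rule: finite_induct)
      case empty
      then show ?case using P(2) by simp
    next
      case (insert \<rho> S)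
      then show ?case using prime m(2) by auto
    qed
    have "(\<Prod>\<rho>\<in>UNIV. m \<rho>) \<in> transl \<tau>" for \<tau>
      using m(1)[of \<tau>] transl_ideal ideal_mult_right
      by (metis prod.remove[of UNIV \<tau>, OF finite UNIV_I])
    then have "(\<Prod>\<rho>\<in>UNIV. m \<rho>) = 0"
      by (rule transl_inter)
    then show False
      using prod_notin[of UNIV] ideal_0[OF P(1)] by simp
  qed
  then obtain \<rho> where "transl \<rho> \<subseteq> P"
    by blast
  then show ?thesis
    using transl_maximal[of \<rho>] P unfolding maximal_ideal_def by blast
qed

lemma separating_factor_exists:
  assumes "transl \<rho> \<noteq> n"
  shows "\<exists>f. f * f = f \<and> f \<in> transl \<rho> \<and> 1 - f \<in> n"
proof -
  have "\<not> transl \<rho> \<subseteq> n"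
    using assms transl_maximal[of \<rho>] maximal_ideal_1[OF max] n_ideal
    unfolding maximal_ideal_def by blast
  then obtain a where a: "a \<in> transl \<rho>" "a \<notin> n"
    by blast
  obtain x where x: "a = a * a * x"
    using pseudofield_flat[OF pf] by blast
  show ?thesis
    using flat_idempotent_mod_maximal[OF max x a(2)] ideal_mult_right[OF transl_ideal a(1)]
    by blast
qed

definition sep_factor :: "'s \<Rightarrow> 'b" where
  "sep_factor \<rho> = (SOME f. f * f = f \<and> f \<in> transl \<rho> \<and> 1 - f \<in> n)"

lemma sep_factor:
  "transl \<rho> \<noteq> n \<Longrightarrow> sep_factor \<rho> * sep_factor \<rho> = sep_factor \<rho> \<and> sep_factor \<rho> \<in> transl \<rho> \<and> 1 - sep_factor \<rho> \<in> n"
  unfolding sep_factor_def by (rule someI_ex, rule separating_factor_exists)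

definition sep :: 'b where
  "sep = (\<Prod>\<rho>\<in>{\<rho>. transl \<rho> \<noteq> n}. sep_factor \<rho>)"

lemma sep_props: "sep * sep = sep \<and> 1 - sep \<in> n"
proof -
  have "(\<Prod>\<rho>\<in>S. sep_factor \<rho>) * (\<Prod>\<rho>\<in>S. sep_factor \<rho>) = (\<Prod>\<rho>\<in>S. sep_factor \<rho>) \<and>
        1 - (\<Prod>\<rho>\<in>S. sep_factor \<rho>) \<in> n" if "S \<subseteq> {\<rho>. transl \<rho> \<noteq> n}" for S
    using finite[of S] that
  proof (induction S rule: finite_induct)
    case empty
    then show ?case using ideal_0[OF n_ideal] by simp
  next
    case (insert \<rho> S)
    let ?f = "sep_factor \<rho>" and ?p = "\<Prod>\<rho>\<in>S. sep_factor \<rho>"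
    have f: "?f * ?f = ?f" "1 - ?f \<in> n"
      using sep_factor insert.prems by blast+
    have p: "?p * ?p = ?p" "1 - ?p \<in> n"
      using insert by blast+
    have idem: "(?f * ?p) * (?f * ?p) = ?f * ?p"
      by (metis f(1) p(1) mult.assoc mult.left_commute)
    have "1 - ?f * ?p = (1 - ?f) + ?f * (1 - ?p)"
      by (simp add: algebra_simps)
    also have "\<dots> \<in> n"
      by (rule ideal_add[OF n_ideal f(2) ideal_mult_left[OF n_ideal p(2)]])
    finally show ?case
      unfolding prod.insert[OF insert(1,2)] using idem by blast
  qed
  then show ?thesis
    unfolding sep_def by blast
qed

lemma sep_idem: "sep * sep = sep"
  using sep_props by blast

lemma sep_compl: "1 - sep \<in> n"
  using sep_props by blast

lemma sep_in_transl: "transl \<rho> \<noteq> n \<Longrightarrow> sep \<in> transl \<rho>"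
proof -
  assume h: "transl \<rho> \<noteq> n"
  have "sep = sep_factor \<rho> * (\<Prod>\<rho>'\<in>{\<rho>. transl \<rho> \<noteq> n} - {\<rho>}. sep_factor \<rho>')"
    unfolding sep_def using h by (subst prod.remove[of _ \<rho>]) auto
  then show ?thesis
    using sep_factor[OF h] transl_ideal ideal_mult_right by metis
qed

lemma sep_notin: "sep \<notin> n"
  using sep_compl ideal_add[OF n_ideal] maximal_ideal_1[OF max] by force

lemma sep_nonzero: "sep \<noteq> 0"
  using sep_notin ideal_0[OF n_ideal] by auto

text \<open>Hence \<open>sep * b = 0\<close> exactly for \<open>b \<in> n\<close>, i.e.\ \<open>sep \<cdot> B \<cong> B/n\<close>.\<close>

lemma sep_mult_eq_0_iff: "sep * b = 0 \<longleftrightarrow> b \<in> n"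
proof
  assume "sep * b = 0"
  then show "b \<in> n"
    using maximal_ideal_prime[OF max _ sep_notin] ideal_0[OF n_ideal] by simp
next
  assume b: "b \<in> n"
  have "sep * b \<in> transl \<tau>" for \<tau>
  proof (cases "transl \<tau> = n")
    case True
    then show ?thesis using b ideal_mult_left[OF n_ideal] by simp
  next
    case False
    then show ?thesis using sep_in_transl transl_ideal ideal_mult_right by blast
  qed
  then show "sep * b = 0"
    by (rule transl_inter)
qed

lemma sep_domain: "sep * x \<noteq> 0 \<Longrightarrow> sep * y \<noteq> 0 \<Longrightarrow> sep * (x * y) \<noteq> 0"
  using maximal_ideal_prime[OF max] by (auto simp: sep_mult_eq_0_iff)

lemma sep_field: "sep * b \<noteq> 0 \<Longrightarrow> \<exists>c. sep * b * c = sep"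
proof -
  assume "sep * b \<noteq> 0"
  then have b: "b \<notin> n"
    by (simp add: sep_mult_eq_0_iff)
  obtain x where x: "b = b * b * x"
    using pseudofield_flat[OF pf] by blast
  have "sep * (1 - b * x) = 0"
    using flat_idempotent_mod_maximal(2)[OF max x b] by (simp add: sep_mult_eq_0_iff)
  then have "sep * b * x = sep"
    by (simp add: algebra_simps)
  then show ?thesis by blast
qed

lemma sep_stable:
  assumes stab: "transl \<sigma> = n"
  shows "act \<sigma> sep = sep"
proof -
  have "sep - act \<sigma> sep \<in> transl \<tau>" for \<tau>
  proof (cases "transl \<tau> = n")
    case True
    have "act \<sigma> (1 - sep) \<in> transl \<sigma>"
      using transl_act_iff[of \<sigma> "1 - sep" \<sigma>] sep_compl transl_0 by simp
    then have "1 - act \<sigma> sep \<in> n"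
      using stab by (simp add: ring_hom_diff[OF hom] ring_hom_1[OF hom])
    then have "(1 - act \<sigma> sep) - (1 - sep) \<in> n"
      using sep_compl n_ideal ideal_diff by blast
    then show ?thesis
      using True by simp
  next
    case False
    have "transl (- \<sigma> + \<tau>) \<noteq> n"
    proof
      assume "transl (- \<sigma> + \<tau>) = n"
      then have "transl (\<sigma> + (- \<sigma> + \<tau>)) = transl (\<sigma> + 0)"
        using transl_cong[of "- \<sigma> + \<tau>" 0 \<sigma>] transl_0 by simp
      then show False
        using False stab by (simp add: add.assoc[symmetric])
    qed
    then have "act \<sigma> sep \<in> transl \<tau>"
      using sep_in_transl transl_act_iff by blast
    then show ?thesis
      using False sep_in_transl transl_ideal ideal_diff by blast
  qed
  then show ?thesis
    using transl_inter[of "sep - act \<sigma> sep"] by simp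
qed

text \<open>Hence, for \<open>\<sigma>\<close> in the stabiliser, \<open>sep \<cdot> x \<cdot> \<sigma>(x) = 0\<close> forces \<open>sep \<cdot> x = 0\<close>, as
  \<open>sep \<cdot> B\<close> is a domain.\<close>

lemma sep_annihilates_shift_product:
  assumes stab: "transl \<sigma> = n" and prod: "sep * (x * act \<sigma> x) = 0"
  shows "sep * x = 0"
proof (rule ccontr)
  assume nz: "sep * x \<noteq> 0"
  have "sep * act \<sigma> x = act \<sigma> (sep * x)"
    using sep_stable[OF stab] by (simp add: ring_hom_mult[OF hom])
  then have "sep * act \<sigma> x \<noteq> 0"
    using nz by (simp add: diff_ring_eq_0_iff[OF dr])
  then show False
    using sep_domain[OF nz] prod by blast
qed

end


section \<open>Splitting idempotents\<close>

text \<open>An idempotent \<open>e\<close> of a difference ring \<open>B\<close> is \<^emph>\<open>splitting\<close> if its translates form a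
  complete family of orthogonal idempotents and \<open>e B\<close> is a field (with unit \<open>e\<close>); then
  \<open>B \<cong> Fun (e B)\<close>.\<close>

definition splitting_idempotent :: "('s::finite \<Rightarrow> 'b::comm_ring_1 \<Rightarrow> 'b) \<Rightarrow> 'b \<Rightarrow> bool" where
  "splitting_idempotent act e \<longleftrightarrow> e * e = e \<and> e \<noteq> 0 \<and>
     (\<forall>\<sigma> \<tau>. \<sigma> \<noteq> \<tau> \<longrightarrow> act \<sigma> e * act \<tau> e = 0) \<and> (\<Sum>\<sigma>\<in>UNIV. act \<sigma> e) = 1 \<and>
     (\<forall>b. e * b \<noteq> 0 \<longrightarrow> (\<exists>c. e * b * c = e))"

lemma idempotent_power: "e * e = e \<Longrightarrow> (e::'a::monoid_mult) ^ Suc k = e"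
  by (induction k) simp_all

context
  fixes act :: "'s::{group_add,finite} \<Rightarrow> 'b::comm_ring_1 \<Rightarrow> 'b" and e :: 'b
  assumes split: "splitting_idempotent act e"
begin

lemma splitting_idem: "e * e = e"
  using split unfolding splitting_idempotent_def by blast

lemma splitting_nonzero: "e \<noteq> 0"
  using split unfolding splitting_idempotent_def by blast

lemma splitting_orthogonal: "\<sigma> \<noteq> \<tau> \<Longrightarrow> act \<sigma> e * act \<tau> e = 0"
  using split unfolding splitting_idempotent_def by blast

lemma splitting_sum: "(\<Sum>\<sigma>\<in>UNIV. act \<sigma> e) = 1"
  using split unfolding splitting_idempotent_def by blast

lemma splitting_field: "e * b \<noteq> 0 \<Longrightarrow> \<exists>c. e * b * c = e"
  using split unfolding splitting_idempotent_def by blast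

lemma splitting_translate:
  assumes dr: "difference_ring act"
  shows "splitting_idempotent act (act \<sigma> e)"
  unfolding splitting_idempotent_def
proof (intro conjI allI impI)
  note hom = diff_ring_hom[OF dr]
  show "act \<sigma> e * act \<sigma> e = act \<sigma> e"
    by (simp add: ring_hom_mult[OF hom, symmetric] splitting_idem)
  show "act \<sigma> e \<noteq> 0"
    by (simp add: diff_ring_eq_0_iff[OF dr] splitting_nonzero)
  show "act \<rho> (act \<sigma> e) * act \<tau> (act \<sigma> e) = 0" if "\<rho> \<noteq> \<tau>" for \<rho> \<tau>
    using splitting_orthogonal[of "\<rho> + \<sigma>" "\<tau> + \<sigma>"] that
    by (simp add: diff_ring_add[OF dr, symmetric])
  show "(\<Sum>\<rho>\<in>UNIV. act \<rho> (act \<sigma> e)) = 1"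
    using sum_translate_right[where \<tau>=\<sigma> and g="\<lambda>\<rho>. act \<rho> e"] splitting_sum
    by (simp add: diff_ring_add[OF dr, symmetric])
  fix b assume "act \<sigma> e * b \<noteq> 0"
  moreover have "act (- \<sigma>) (act \<sigma> e * b) = e * act (- \<sigma>) b"
    by (simp add: ring_hom_mult[OF hom] diff_ring_inv_left[OF dr])
  ultimately have "e * act (- \<sigma>) b \<noteq> 0"
    using diff_ring_eq_0_iff[OF dr] by metis
  then obtain c where "e * act (- \<sigma>) b * c = e"
    using splitting_field by blast
  then have "act \<sigma> e * b * act \<sigma> c = act \<sigma> e"
    by (metis ring_hom_mult[OF hom] diff_ring_inv_right[OF dr])
  then show "\<exists>c. act \<sigma> e * b * c = act \<sigma> e"
    by blast
qed

end


section \<open>Difference closed pseudofields split\<close>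

text \<open>If \<open>B\<close> is difference closed, the stabiliser of a maximal ideal \<open>n\<close> is trivial, so the
  translates of the idempotent \<open>sep\<close> (which separates \<open>n\<close> from its other translates) are
  orthogonal and sum to \<open>1\<close>: \<open>sep\<close> is a splitting idempotent.\<close>

locale pseudofield_max_dclosed = pseudofield_max act n
  for act :: "'s::{group_add,finite} \<Rightarrow> 'b::comm_ring_1 \<Rightarrow> 'b" and n +
  assumes dc: "difference_closed act"
begin

text \<open>If \<open>\<sigma> \<noteq> 0\<close> stabilised \<open>n\<close>, then \<open>sep \<cdot> y\<close> would vanish on the zeros of
  \<open>sep \<cdot> y \<cdot> \<sigma>(y)\<close> (because \<open>sep \<cdot> B\<close> is a domain fixed by \<open>\<sigma>\<close>), so a power of \<open>sep \<cdot> y\<close>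
  would lie in the difference ideal \<open>[sep \<cdot> y \<cdot> \<sigma>(y)]\<close>.  Evaluating \<open>y \<mapsto> sep\<close> and all other
  \<open>\<rho>(y) \<mapsto> 0\<close> kills this ideal but not the power.\<close>

lemma stabilizer_trivial:
  assumes stab: "transl \<sigma> = n"
  shows "\<sigma> = 0"
proof (rule ccontr)
  assume \<sigma>: "\<sigma> \<noteq> 0"
  define m :: "'s \<times> nat \<Rightarrow>\<^sub>0 nat" where
    "m = Poly_Mapping.single (0, 0) 1 + Poly_Mapping.single (\<sigma>, 0) 1"
  define g :: "('s, 'b) dpoly" where "g = Poly_Mapping.single m sep"
  define f :: "('s, 'b) dpoly" where "f = Poly_Mapping.single (Poly_Mapping.single (0, 0) 1) sep"
  have "Poly_Mapping.keys m \<subseteq> {(0, 0), (\<sigma>, 0)}"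
    unfolding m_def
    using keys_add[of "Poly_Mapping.single (0, 0) 1" "Poly_Mapping.single (\<sigma>, 0) (1::nat)"]
    by auto
  then have g: "g \<in> dpolys 1"
    unfolding g_def dpolys_def by (auto simp: keys_single)
  have f: "f \<in> dpolys 1"
    unfolding f_def by (rule dpolys_single_var0)
  have eval_g: "dpoly_eval act x g = sep * (x 0 * act \<sigma> (x 0))" for x
    by (simp add: dpoly_eval_pm_eval g_def m_def pm_eval_single monom_val_add monom_val_single
                  diff_ring_0[OF dr])
  have eval_f: "dpoly_eval act x f = sep * x 0" for x
    by (simp add: dpoly_eval_pm_eval f_def pm_eval_single monom_val_single diff_ring_0[OF dr])
  have "dpoly_eval act x f = 0" if "\<forall>g'\<in>dideal_gen act g. dpoly_eval act x g' = 0" for x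
  proof -
    have "sep * (x 0 * act \<sigma> (x 0)) = 0"
      using that dideal_gen_generator[OF dr g] eval_g by metis
    then show ?thesis
      using sep_annihilates_shift_product[OF stab] eval_f by metis
  qed
  then obtain k h where fk: "f ^ k = (\<Sum>\<rho>\<in>UNIV. h \<rho> * dpoly_act act \<rho> g)"
    using difference_closed_nullstellensatz[OF dc g f] by blast
  define val :: "'s \<times> nat \<Rightarrow> 'b" where "val v = (if v = (0, 0) then sep else 0)" for v
  let ?E = "pm_eval id val"
  have E: "ring_hom ?E"
    by (rule pm_eval_ring_hom[OF ring_hom_id])
  have "?E (f ^ k) = sep ^ k"
    by (simp add: ring_hom_power[OF E] f_def pm_eval_single monom_val_single val_def sep_idem)
  moreover have "sep ^ k \<noteq> 0"
    using pseudofield_nontrivial[OF pf] sep_nonzero idempotent_power[OF sep_idem]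
    by (cases k) simp_all
  moreover have "?E (dpoly_act act \<rho> g) = 0" for \<rho>
  proof -
    have "mon_shift \<rho> m = Poly_Mapping.single (\<rho>, 0) 1 + Poly_Mapping.single (\<rho> + \<sigma>, 0) 1"
      by (simp add: m_def mon_shift_add mon_shift_single)
    moreover have "val (\<rho>, 0) * val (\<rho> + \<sigma>, 0) = 0"
      using \<sigma> by (auto simp: val_def)
    ultimately show ?thesis
      by (simp add: g_def dpoly_act_single[OF dr] pm_eval_single monom_val_add monom_val_single)
  qed
  ultimately show False
    using fk by (simp add: ring_hom_sum[OF E] ring_hom_mult[OF E])
qed

lemma sep_in_other_transl: "\<rho> \<noteq> \<sigma> \<Longrightarrow> act \<sigma> sep \<in> transl \<rho>"
proof -
  assume "\<rho> \<noteq> \<sigma>"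
  then have "- \<sigma> + \<rho> \<noteq> 0"
    by (metis add_minus_cancel add.right_neutral)
  then have "transl (- \<sigma> + \<rho>) \<noteq> n"
    using stabilizer_trivial by blast
  then show ?thesis
    using sep_in_transl transl_act_iff by blast
qed

lemma sep_orthogonal: "\<sigma> \<noteq> \<tau> \<Longrightarrow> act \<sigma> sep * act \<tau> sep = 0"
proof (rule transl_inter)
  fix \<rho> assume "\<sigma> \<noteq> \<tau>"
  then have "act \<sigma> sep \<in> transl \<rho> \<or> act \<tau> sep \<in> transl \<rho>"
    using sep_in_other_transl by metis
  then show "act \<sigma> sep * act \<tau> sep \<in> transl \<rho>"
    using transl_ideal ideal_mult_left ideal_mult_right by blast
qed

lemma sep_sum: "(\<Sum>\<sigma>\<in>UNIV. act \<sigma> sep) = 1"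
proof -
  have "1 - (\<Sum>\<sigma>\<in>UNIV. act \<sigma> sep) \<in> transl \<rho>" for \<rho>
  proof -
    have "act \<rho> (1 - sep) \<in> transl \<rho>"
      using transl_act_iff[of \<rho> "1 - sep" \<rho>] sep_compl transl_0 by simp
    then have "1 - act \<rho> sep \<in> transl \<rho>"
      by (simp add: ring_hom_diff[OF hom] ring_hom_1[OF hom])
    moreover have "(\<Sum>\<sigma>\<in>UNIV - {\<rho>}. act \<sigma> sep) \<in> transl \<rho>"
      by (rule ideal_sum[OF transl_ideal]) (use sep_in_other_transl in auto)
    moreover have "(\<Sum>\<sigma>\<in>UNIV. act \<sigma> sep) = act \<rho> sep + (\<Sum>\<sigma>\<in>UNIV - {\<rho>}. act \<sigma> sep)"
      by (subst sum.remove[of _ \<rho>]) auto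
    ultimately show ?thesis
      using transl_ideal ideal_diff by (metis diff_diff_eq)
  qed
  then show ?thesis
    using transl_inter by fastforce
qed

lemma sep_splitting: "splitting_idempotent act sep"
  unfolding splitting_idempotent_def
  using sep_idem sep_nonzero sep_orthogonal sep_sum sep_field by blast

end


section \<open>Roots of monic polynomials in \<open>e B\<close>\<close>

definition dpoly_of_poly :: "'b::comm_ring_1 poly \<Rightarrow> ('s::group_add, 'b) dpoly" where
  "dpoly_of_poly Q =
     (\<Sum>j\<le>degree Q. Poly_Mapping.single (Poly_Mapping.single (0, 0) j) (coeff Q j))"

lemma dpoly_of_poly_dpolys: "dpoly_of_poly Q \<in> dpolys 1"
  unfolding dpoly_of_poly_def by (rule dpolys_sum) (rule dpolys_single_var0)

lemma dpoly_eval_dpoly_of_poly: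
  "difference_ring act \<Longrightarrow> dpoly_eval act x (dpoly_of_poly Q) = poly Q (x 0)"
  by (simp add: dpoly_eval_pm_eval dpoly_of_poly_def pm_eval_sum[OF ring_hom_id]
                pm_eval_single monom_val_single diff_ring_0 poly_altdef)

lemma lookup_dpoly_of_poly_absorb:
  "(\<And>i. e * coeff Q i = coeff Q i) \<Longrightarrow>
   e * Poly_Mapping.lookup (dpoly_of_poly Q) k = Poly_Mapping.lookup (dpoly_of_poly Q) k"
  unfolding dpoly_of_poly_def lookup_sum lookup_single sum_distrib_left
  by (rule sum.cong) (simp_all add: when_def)

definition var_X :: "'s::group_add \<times> nat \<Rightarrow> 'b::comm_ring_1 poly" where
  "var_X v = (if v = (0, 0) then [:0, 1:] else 0)"

lemma pm_eval_var_X_dpoly_of_poly: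
  "pm_eval (\<lambda>c. [:c:]) var_X (dpoly_of_poly Q :: ('s::group_add, 'b::comm_ring_1) dpoly) = Q"
proof -
  have "pm_eval (\<lambda>c. [:c:]) var_X (dpoly_of_poly Q :: ('s, 'b) dpoly) =
        (\<Sum>j\<le>degree Q. [:coeff Q j:] * [:0, 1:] ^ j)"
    by (simp add: dpoly_of_poly_def pm_eval_sum[OF ring_hom_const_poly] pm_eval_single
                  monom_val_single var_X_def)
  also have "\<dots> = (\<Sum>j\<le>degree Q. monom (coeff Q j) j)"
    by (simp add: monom_altdef)
  also have "\<dots> = Q"
    by (rule poly_as_sum_of_monoms)
  finally show ?thesis .
qed

lemma const_mult_pm_eval_annihilated:
  assumes "\<And>m. z * Poly_Mapping.lookup p m = 0"
  shows "[:z:] * pm_eval (\<lambda>c. [:c:]) val p = 0"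
  unfolding pm_eval_def sum_distrib_left
proof (rule sum.neutral, rule ballI)
  fix m
  have "[:z:] * ([:Poly_Mapping.lookup p m:] * monom_val val m) =
        [:z * Poly_Mapping.lookup p m:] * monom_val val m"
    by (simp only: mult.assoc[symmetric] ring_hom_mult[OF ring_hom_const_poly, symmetric])
  then show "[:z:] * ([:Poly_Mapping.lookup p m:] * monom_val val m) = 0"
    by (simp add: assms)
qed

text \<open>Multiplication by a splitting idempotent \<open>e\<close> annihilates the image in \<open>B[X]\<close> of every
  translate \<open>\<rho> \<noteq> 0\<close> of a difference polynomial whose coefficients are absorbed by \<open>e\<close>,
  since \<open>e \<cdot> \<rho>(e) = 0\<close>.\<close>

lemma splitting_kills_translates:
  assumes dr: "difference_ring act" and e: "splitting_idempotent act e" and \<rho>: "\<rho> \<noteq> 0"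
    and absorb: "\<And>k. e * Poly_Mapping.lookup g k = Poly_Mapping.lookup g k"
  shows "[:e:] * pm_eval (\<lambda>c. [:c:]) val (dpoly_act act \<rho> g) = 0"
proof (rule const_mult_pm_eval_annihilated)
  fix k
  let ?k = "mon_shift (- \<rho>) k"
  have orth: "e * act \<rho> e = 0"
    using splitting_orthogonal[OF e \<rho>[symmetric]] by (simp add: diff_ring_0[OF dr])
  have "e * Poly_Mapping.lookup (dpoly_act act \<rho> g) k = e * act \<rho> (e * Poly_Mapping.lookup g ?k)"
    by (simp add: dpoly_act_lookup[OF dr] absorb)
  also have "\<dots> = (e * act \<rho> e) * act \<rho> (Poly_Mapping.lookup g ?k)"
    by (simp add: ring_hom_mult[OF diff_ring_hom[OF dr]] mult.assoc)
  finally show "e * Poly_Mapping.lookup (dpoly_act act \<rho> g) k = 0"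
    by (simp add: orth)
qed

lemma const_multiple_of_monic:
  fixes Q q :: "'b::comm_ring_1 poly"
  assumes Q: "lead_coeff Q = 1" "degree Q > 0" and eq: "[:c:] = q * Q"
  shows "c = 0"
proof (rule ccontr)
  assume "c \<noteq> 0"
  then have "q \<noteq> 0"
    using eq by auto
  have "coeff (q * Q) (degree q + degree Q) = lead_coeff q"
    by (simp add: coeff_mult_degree_sum Q(1))
  also have "\<dots> \<noteq> 0"
    using \<open>q \<noteq> 0\<close> by simp
  finally have "coeff [:c:] (degree q + degree Q) \<noteq> 0"
    by (subst eq)
  then show False
    using Q(2) by (cases "degree q + degree Q") (simp_all add: coeff_pCons)
qed

text \<open>\<open>e B\<close> is algebraically closed for a splitting idempotent \<open>e\<close> of a difference closed
  pseudofield: if \<open>e Q(y)\<close> had no zero, then \<open>1 \<in> [e Q(y)]\<close>; mapping \<open>y \<mapsto> X\<close>,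
  \<open>\<rho>(y) \<mapsto> 0\<close> and multiplying by \<open>e\<close> kills all translates \<open>\<rho> \<noteq> 0\<close> and exhibits the
  constant \<open>e\<close> as a multiple of \<open>Q\<close>.\<close>

theorem splitting_idempotent_root:
  fixes act :: "'s::{group_add,finite} \<Rightarrow> 'b::comm_ring_1 \<Rightarrow> 'b"
  assumes dc: "difference_closed act" and e: "splitting_idempotent act e"
    and Q: "lead_coeff Q = 1" "degree Q > 0"
  shows "\<exists>x. e * poly Q x = 0"
proof (rule ccontr)
  assume no_root: "\<nexists>x. e * poly Q x = 0"
  have dr: "difference_ring act"
    using dc unfolding difference_closed_def pseudofield_def by blast
  define g :: "('s, 'b) dpoly" where "g = dpoly_of_poly (smult e Q)"
  have g: "g \<in> dpolys 1"
    unfolding g_def by (rule dpoly_of_poly_dpolys)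
  have eval_g: "dpoly_eval act x g = e * poly Q (x 0)" for x
    by (simp add: g_def dpoly_eval_dpoly_of_poly[OF dr])
  have "dpoly_eval act x 1 = 0" if "\<forall>g'\<in>dideal_gen act g. dpoly_eval act x g' = 0" for x
    using that dideal_gen_generator[OF dr g] no_root eval_g by metis
  then obtain k h where "1 ^ k = (\<Sum>\<rho>\<in>UNIV. h \<rho> * dpoly_act act \<rho> g)"
    using difference_closed_nullstellensatz[OF dc g, of 1] by (auto simp: dpolys_def)
  then have one: "1 = (\<Sum>\<rho>\<in>UNIV. h \<rho> * dpoly_act act \<rho> g)"
    by simp
  let ?U = "pm_eval (\<lambda>c. [:c:]) (var_X :: 's \<times> nat \<Rightarrow> 'b poly)"
  have U: "ring_hom ?U"
    by (rule pm_eval_ring_hom[OF ring_hom_const_poly])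
  have absorb: "e * Poly_Mapping.lookup g k = Poly_Mapping.lookup g k" for k
    unfolding g_def
    by (rule lookup_dpoly_of_poly_absorb) (simp add: mult.assoc[symmetric] splitting_idem[OF e])
  note kill = splitting_kills_translates[OF dr e _ absorb]
  have "[:e:] = [:e:] * ?U 1"
    by (simp add: ring_hom_1[OF U])
  also have "\<dots> = (\<Sum>\<rho>\<in>UNIV. ?U (h \<rho>) * ([:e:] * ?U (dpoly_act act \<rho> g)))"
    by (subst one) (simp add: ring_hom_sum[OF U] ring_hom_mult[OF U] sum_distrib_left algebra_simps)
  also have "\<dots> = ?U (h 0) * ([:e:] * ?U (dpoly_act act 0 g))"
  proof (rule sum_single_nonzero)
    fix \<rho> :: 's assume "\<rho> \<noteq> 0"
    show "?U (h \<rho>) * ([:e:] * ?U (dpoly_act act \<rho> g)) = 0"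
      by (simp only: kill[OF \<open>\<rho> \<noteq> 0\<close>] mult_zero_right)
  qed
  also have "\<dots> = ?U (h 0) * ([:e:] * smult e Q)"
    by (simp only: dpoly_act_0[OF dr] g_def pm_eval_var_X_dpoly_of_poly)
  also have "\<dots> = (?U (h 0) * [:e:]) * Q"
    by (simp add: splitting_idem[OF e] mult.assoc)
  finally have "e = 0"
    by (rule const_multiple_of_monic[OF Q])
  then show False
    using splitting_nonzero[OF e] by contradiction
qed


section \<open>A splitting idempotent adapted to the embedding \<open>A \<rightarrow> B\<close>\<close>

text \<open>For a maximal ideal \<open>n\<close> of \<open>B\<close>, the kernel of \<open>a \<mapsto> sep \<cdot> \<iota>(a)\<close> is the prime ideal
  \<open>\<iota>\<^sup>-\<^sup>1(n)\<close> of \<open>A\<close>, hence a translate \<open>\<rho>(M)\<close>; translating \<open>sep\<close> by \<open>-\<rho>\<close> moves the kernel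
  to \<open>M\<close>.\<close>

lemma adapted_splitting_idempotent:
  fixes actA :: "'s::{group_add,finite} \<Rightarrow> 'a::comm_ring_1 \<Rightarrow> 'a"
    and actB :: "'s \<Rightarrow> 'b::comm_ring_1 \<Rightarrow> 'b" and \<iota> :: "'a \<Rightarrow> 'b"
  assumes pfA: "pseudofield actA" and M: "maximal_ideal M" and dc: "difference_closed actB"
    and dh: "difference_hom actA actB \<iota>"
  shows "\<exists>e. splitting_idempotent actB e \<and> (\<forall>a. e * \<iota> a = 0 \<longleftrightarrow> a \<in> M)"
proof -
  have pfB: "pseudofield actB"
    using dc unfolding difference_closed_def by blast
  obtain n :: "'b set" where n: "maximal_ideal n"
    using maximal_ideal_exists[OF pseudofield_nontrivial[OF pfB]] by blast
  interpret B: pseudofield_max_dclosed actB n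
    by unfold_locales (use pfB n dc in auto)
  interpret A: pseudofield_max actA M
    by unfold_locales (use pfA M in auto)
  have \<iota>: "ring_hom \<iota>"
    using dh by (rule diff_hom_ring_hom)
  have "\<exists>\<rho>. {a. \<iota> a \<in> n} = A.transl \<rho>"
  proof (rule A.prime_ideal_is_transl)
    show "is_ideal {a. \<iota> a \<in> n}"
      by (rule ideal_preimage[OF B.n_ideal \<iota>])
    show "1 \<notin> {a. \<iota> a \<in> n}"
      using maximal_ideal_1[OF n] by (simp add: ring_hom_1[OF \<iota>])
    show "a \<in> {a. \<iota> a \<in> n} \<or> b \<in> {a. \<iota> a \<in> n}" if "a * b \<in> {a. \<iota> a \<in> n}" for a b
      using that maximal_ideal_prime[OF n] by (auto simp: ring_hom_mult[OF \<iota>])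
  qed
  then obtain \<rho> where \<rho>: "\<And>a. \<iota> a \<in> n \<longleftrightarrow> actA (- \<rho>) a \<in> M"
    unfolding A.transl_def by blast
  define e where "e = actB (- \<rho>) B.sep"
  have "e * \<iota> a = 0 \<longleftrightarrow> a \<in> M" for a
  proof -
    have "e * \<iota> a = actB (- \<rho>) (B.sep * \<iota> (actA \<rho> a))"
      unfolding e_def
      by (simp add: ring_hom_mult[OF B.hom] diff_hom_commute[OF dh] diff_ring_inv_left[OF B.dr])
    then have "e * \<iota> a = 0 \<longleftrightarrow> \<iota> (actA \<rho> a) \<in> n"
      by (simp add: diff_ring_eq_0_iff[OF B.dr] B.sep_mult_eq_0_iff)
    also have "\<dots> \<longleftrightarrow> a \<in> M"
      by (simp add: \<rho> diff_ring_inv_left[OF A.dr])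
    finally show ?thesis .
  qed
  moreover have "splitting_idempotent actB e"
    unfolding e_def by (rule splitting_translate[OF B.sep_splitting B.dr])
  ultimately show ?thesis
    by blast
qed


section \<open>Subfields, polynomials over a subfield, minimal polynomials\<close>

definition subfield :: "'l::field set \<Rightarrow> bool" where
  "subfield F \<longleftrightarrow> 0 \<in> F \<and> 1 \<in> F \<and> (\<forall>x\<in>F. \<forall>y\<in>F. x + y \<in> F \<and> x * y \<in> F) \<and>
     (\<forall>x\<in>F. - x \<in> F \<and> inverse x \<in> F)"

definition polys_over :: "'l::field set \<Rightarrow> 'l poly set" where
  "polys_over F = {p. \<forall>i. coeff p i \<in> F}"

context
  fixes F :: "'l::field set"
  assumes sf: "subfield F"
begin

lemma subfield_0: "0 \<in> F"
  using sf unfolding subfield_def by blast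

lemma subfield_1: "1 \<in> F"
  using sf unfolding subfield_def by blast

lemma subfield_add: "x \<in> F \<Longrightarrow> y \<in> F \<Longrightarrow> x + y \<in> F"
  using sf unfolding subfield_def by blast

lemma subfield_mult: "x \<in> F \<Longrightarrow> y \<in> F \<Longrightarrow> x * y \<in> F"
  using sf unfolding subfield_def by blast

lemma subfield_uminus: "x \<in> F \<Longrightarrow> - x \<in> F"
  using sf unfolding subfield_def by blast

lemma subfield_inverse: "x \<in> F \<Longrightarrow> inverse x \<in> F"
  using sf unfolding subfield_def by blast

lemma subfield_diff: "x \<in> F \<Longrightarrow> y \<in> F \<Longrightarrow> x - y \<in> F"
  by (metis diff_conv_add_uminus subfield_add subfield_uminus)

lemma subfield_divide: "x \<in> F \<Longrightarrow> y \<in> F \<Longrightarrow> x / y \<in> F"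
  by (metis divide_inverse subfield_inverse subfield_mult)

lemma subfield_sum: "(\<And>i. i \<in> S \<Longrightarrow> g i \<in> F) \<Longrightarrow> sum g S \<in> F"
  by (induction S rule: infinite_finite_induct) (auto simp: subfield_0 subfield_add)

lemma polys_over_coeff: "p \<in> polys_over F \<Longrightarrow> coeff p i \<in> F"
  unfolding polys_over_def by blast

lemma polys_over_lead: "p \<in> polys_over F \<Longrightarrow> lead_coeff p \<in> F"
  unfolding polys_over_def by blast

lemma polys_over_0: "0 \<in> polys_over F"
  unfolding polys_over_def by (simp add: subfield_0)

lemma polys_over_add: "p \<in> polys_over F \<Longrightarrow> q \<in> polys_over F \<Longrightarrow> p + q \<in> polys_over F"
  unfolding polys_over_def by (simp add: subfield_add)

lemma polys_over_diff: "p \<in> polys_over F \<Longrightarrow> q \<in> polys_over F \<Longrightarrow> p - q \<in> polys_over F"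
  unfolding polys_over_def by (simp add: subfield_diff)

lemma polys_over_uminus: "p \<in> polys_over F \<Longrightarrow> - p \<in> polys_over F"
  unfolding polys_over_def by (simp add: subfield_uminus)

lemma polys_over_mult: "p \<in> polys_over F \<Longrightarrow> q \<in> polys_over F \<Longrightarrow> p * q \<in> polys_over F"
  unfolding polys_over_def by (simp add: coeff_mult subfield_sum subfield_mult)

lemma polys_over_smult: "c \<in> F \<Longrightarrow> p \<in> polys_over F \<Longrightarrow> smult c p \<in> polys_over F"
  unfolding polys_over_def by (simp add: subfield_mult)

lemma polys_over_monom: "c \<in> F \<Longrightarrow> monom c k \<in> polys_over F"
  unfolding polys_over_def by (simp add: coeff_monom subfield_0)

lemma polys_over_const: "c \<in> F \<Longrightarrow> [:c:] \<in> polys_over F"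
  unfolding polys_over_def by (simp add: coeff_pCons subfield_0 split: nat.split)

lemma polys_over_X: "[:0, 1:] \<in> polys_over F"
  unfolding polys_over_def by (simp add: coeff_pCons subfield_0 subfield_1 split: nat.split)

lemma polys_over_division_step:
  assumes "p \<in> polys_over F" "s \<in> polys_over F"
  shows "p - smult (lead_coeff p / lead_coeff s) (monom 1 k * s) \<in> polys_over F"
  using assms
  by (intro polys_over_diff polys_over_smult polys_over_mult polys_over_monom subfield_divide
            polys_over_lead subfield_1)

end

lemma division_step_degree:
  fixes p s :: "'l::field poly"
  assumes "s \<noteq> 0" "degree s \<le> degree p"
  defines "p' \<equiv> p - smult (lead_coeff p / lead_coeff s) (monom 1 (degree p - degree s) * s)"
  shows "p' = 0 \<or> degree p' < degree p"
proof -
  let ?k = "degree p - degree s"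
  have deg: "degree (monom 1 ?k * s) = degree p"
    using assms by (simp add: degree_mult_eq degree_monom_eq)
  have lead: "lead_coeff (monom 1 ?k * s) = lead_coeff s"
    by (simp add: lead_coeff_mult degree_monom_eq lead_coeff_monom)
  have "degree p' \<le> degree p"
    unfolding p'_def using degree_smult_le[of _ "monom 1 ?k * s"] deg
    by (intro degree_diff_le) auto
  moreover have "coeff p' (degree p) = 0"
    unfolding p'_def using lead deg assms(1) by simp
  ultimately show ?thesis
    by (metis le_neq_implies_less leading_coeff_0_iff)
qed

lemma polys_over_division:
  assumes sf: "subfield F" and s: "s \<in> polys_over F" "s \<noteq> 0"
  shows "p \<in> polys_over F \<Longrightarrow>
         \<exists>t r. t \<in> polys_over F \<and> r \<in> polys_over F \<and> p = s * t + r \<and> (r = 0 \<or> degree r < degree s)"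
proof (induction "degree p" arbitrary: p rule: less_induct)
  case less
  show ?case
  proof (cases "p = 0 \<or> degree p < degree s")
    case True
    then show ?thesis
      using less.prems polys_over_0[OF sf] by (intro exI[of _ 0] exI[of _ p]) auto
  next
    case False
    let ?c = "lead_coeff p / lead_coeff s" and ?k = "degree p - degree s"
    define p' where "p' = p - smult ?c (monom 1 ?k * s)"
    have p': "p' \<in> polys_over F"
      unfolding p'_def by (rule polys_over_division_step[OF sf less.prems s(1)])
    have m: "smult ?c (monom 1 ?k) \<in> polys_over F"
      using sf less.prems s
      by (intro polys_over_smult polys_over_monom subfield_divide polys_over_lead subfield_1) auto
    have eq: "p = p' + s * smult ?c (monom 1 ?k)"
      unfolding p'_def by (simp add: algebra_simps)
    have "p' = 0 \<or> degree p' < degree p"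
      using division_step_degree[OF s(2), of p] False unfolding p'_def by simp
    then show ?thesis
    proof
      assume "p' = 0"
      then show ?thesis
        using eq m polys_over_0[OF sf] by (intro exI[of _ "smult ?c (monom 1 ?k)"] exI[of _ 0]) auto
    next
      assume "degree p' < degree p"
      then obtain t r where tr: "t \<in> polys_over F" "r \<in> polys_over F" "p' = s * t + r"
        "r = 0 \<or> degree r < degree s"
        using less.hyps[OF _ p'] by blast
      have "p = s * (t + smult ?c (monom 1 ?k)) + r"
        using eq tr(3) by (simp add: algebra_simps)
      then show ?thesis
        using tr polys_over_add[OF sf tr(1) m] by blast
    qed
  qed
qed

locale min_poly =
  fixes F :: "'l::field set" and y :: 'l and q :: "'l poly"
  assumes sf: "subfield F" and q_over: "q \<in> polys_over F" and q_monic: "lead_coeff q = 1"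
    and q_root: "poly q y = 0" and q_degree: "degree q > 0"
    and q_minimal: "\<And>p. p \<in> polys_over F \<Longrightarrow> p \<noteq> 0 \<Longrightarrow> poly p y = 0 \<Longrightarrow> degree q \<le> degree p"
begin

lemma q_nonzero: "q \<noteq> 0"
  using q_monic by auto

lemma reduce_by_q:
  assumes "p \<in> polys_over F" "degree q \<le> degree p"
  defines "p' \<equiv> p - smult (lead_coeff p) (monom 1 (degree p - degree q) * q)"
  shows "p' \<in> polys_over F" "poly p' y = poly p y" "p' = 0 \<or> degree p' < degree p"
proof -
  show "p' \<in> polys_over F"
    using polys_over_division_step[OF sf assms(1) q_over] q_monic unfolding p'_def by simp
  show "poly p' y = poly p y"
    unfolding p'_def by (simp add: q_root)
  show "p' = 0 \<or> degree p' < degree p"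
    using division_step_degree[OF q_nonzero assms(2)] q_monic unfolding p'_def by simp
qed

lemma inverse_in_adjoined:
  "p \<in> polys_over F \<Longrightarrow> poly p y \<noteq> 0 \<Longrightarrow> \<exists>b\<in>polys_over F. poly b y * poly p y = 1"
proof (induction "degree p" arbitrary: p rule: less_induct)
  case less
  show ?case
  proof (cases "degree p = 0")
    case True
    then obtain c where c: "p = [:c:]"
      by (metis degree_eq_zeroE)
    have "c \<in> F" "c \<noteq> 0"
      using less.prems c polys_over_coeff[OF sf less.prems(1), of 0] by simp_all
    then show ?thesis
      using c polys_over_const[OF sf subfield_inverse[OF sf]] by (intro bexI[of _ "[:inverse c:]"]) auto
  next
    case deg_p: False
    show ?thesis
    proof (cases "degree q \<le> degree p")
      case True
      define p' where "p' = p - smult (lead_coeff p) (monom 1 (degree p - degree q) * q)"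
      have p': "p' \<in> polys_over F" "poly p' y = poly p y" "p' = 0 \<or> degree p' < degree p"
        using reduce_by_q[OF less.prems(1) True] unfolding p'_def by blast+
      then have "degree p' < degree p"
        using less.prems(2) by auto
      from less.hyps[OF this p'(1)] p'(2) less.prems(2) show ?thesis
        by simp
    next
      case False
      have "p \<noteq> 0"
        using less.prems(2) by auto
      then obtain t r where tr: "t \<in> polys_over F" "r \<in> polys_over F" "q = p * t + r"
        "r = 0 \<or> degree r < degree p"
        using polys_over_division[OF sf less.prems(1) _ q_over] by blast
      have "t \<noteq> 0"
        using tr False q_nonzero by auto
      then have "degree (p * t) = degree p + degree t"
        by (rule degree_mult_eq[OF \<open>p \<noteq> 0\<close>])
      moreover have "degree q = degree (p * t)"
        using tr(3,4) deg_p calculation by (auto simp: degree_add_eq_left)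
      ultimately have "degree t < degree q"
        using deg_p by simp
      then have "poly t y \<noteq> 0"
        using q_minimal[OF tr(1) \<open>t \<noteq> 0\<close>] by fastforce
      have r_y: "poly r y = - (poly p y * poly t y)"
        using tr(3) q_root by (simp add: eq_neg_iff_add_eq_0 add.commute)
      then have "poly r y \<noteq> 0"
        using \<open>poly t y \<noteq> 0\<close> less.prems(2) by simp
      then have "degree r < degree p"
        using tr(4) by auto
      then obtain b where b: "b \<in> polys_over F" "poly b y * poly r y = 1"
        using less.hyps tr(2) \<open>poly r y \<noteq> 0\<close> by blast
      have "poly (- (b * t)) y * poly p y = 1"
        using b(2) r_y by (simp add: algebra_simps)
      moreover have "- (b * t) \<in> polys_over F"
        by (rule polys_over_uminus[OF sf polys_over_mult[OF sf b(1) tr(1)]])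
      ultimately show ?thesis
        by blast
    qed
  qed
qed

definition adjoin :: "'l set" where
  "adjoin = {poly s y |s. s \<in> polys_over F}"

lemma adjoinI: "s \<in> polys_over F \<Longrightarrow> poly s y \<in> adjoin"
  unfolding adjoin_def by blast

lemma adjoinE: "z \<in> adjoin \<Longrightarrow> (\<And>s. s \<in> polys_over F \<Longrightarrow> z = poly s y \<Longrightarrow> thesis) \<Longrightarrow> thesis"
  unfolding adjoin_def by blast

lemma subset_adjoin: "F \<subseteq> adjoin"
  using adjoinI[OF polys_over_const[OF sf]] by force

lemma in_adjoin: "y \<in> adjoin"
  using adjoinI[OF polys_over_X[OF sf]] by simp

lemma subfield_adjoin: "subfield adjoin"
  unfolding subfield_def
proof (intro conjI ballI)
  show "0 \<in> adjoin" "1 \<in> adjoin"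
    using subset_adjoin subfield_0[OF sf] subfield_1[OF sf] by blast+
  fix a b assume "a \<in> adjoin" "b \<in> adjoin"
  then show "a + b \<in> adjoin" "a * b \<in> adjoin"
    by (auto elim!: adjoinE intro: adjoinI[OF polys_over_add[OF sf]] adjoinI[OF polys_over_mult[OF sf]]
             simp flip: poly_add poly_mult)
next
  fix a assume "a \<in> adjoin"
  then obtain s where s: "s \<in> polys_over F" "a = poly s y"
    by (rule adjoinE)
  then show "- a \<in> adjoin"
    using adjoinI[OF polys_over_uminus[OF sf s(1)]] by simp
  show "inverse a \<in> adjoin"
  proof (cases "a = 0")
    case True
    then show ?thesis
      using subset_adjoin subfield_0[OF sf] by auto
  next
    case False
    then obtain b where "b \<in> polys_over F" "poly b y * poly s y = 1"
      using inverse_in_adjoined s by blast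
    then show ?thesis
      using adjoinI[of b] s by (metis inverse_unique mult.commute)
  qed
qed

end

lemma min_poly_exists:
  assumes sf: "subfield F" and p0: "p0 \<in> polys_over F" "p0 \<noteq> 0" "poly p0 y = 0"
  shows "\<exists>q. min_poly F y q"
proof -
  define d where "d = (LEAST d. \<exists>p\<in>polys_over F. p \<noteq> 0 \<and> poly p y = 0 \<and> degree p = d)"
  have "\<exists>p\<in>polys_over F. p \<noteq> 0 \<and> poly p y = 0 \<and> degree p = d"
    unfolding d_def by (rule LeastI[of _ "degree p0"]) (use p0 in blast)
  then obtain q0 where q0: "q0 \<in> polys_over F" "q0 \<noteq> 0" "poly q0 y = 0" "degree q0 = d"
    by blast
  have d_min: "\<And>p. p \<in> polys_over F \<Longrightarrow> p \<noteq> 0 \<Longrightarrow> poly p y = 0 \<Longrightarrow> d \<le> degree p"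
    unfolding d_def by (rule Least_le) blast
  define q where "q = smult (inverse (lead_coeff q0)) q0"
  have "lead_coeff q0 \<noteq> 0"
    using q0(2) by simp
  then have deg_q: "degree q = d"
    unfolding q_def using q0(4) by (simp del: leading_coeff_0_iff)
  have "degree q > 0"
  proof (rule ccontr)
    assume "\<not> degree q > 0"
    then obtain c where "q0 = [:c:]"
      using deg_q q0(4) by (metis degree_eq_zeroE gr0I)
    then show False
      using q0(2,3) by simp
  qed
  moreover have "q \<in> polys_over F"
    unfolding q_def
    by (rule polys_over_smult[OF sf subfield_inverse[OF sf polys_over_lead[OF sf q0(1)]] q0(1)])
  moreover have "lead_coeff q = 1" "poly q y = 0"
    unfolding q_def using q0(2,3) by simp_all
  ultimately have "min_poly F y q"
    using sf d_min deg_q by unfold_locales simp_all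
  then show ?thesis
    by blast
qed


section \<open>Extending \<open>A/M \<rightarrow> e B\<close> to an embedding of the algebraic closure\<close>

lemma poly_absorb:
  fixes e :: "'b::comm_ring_1"
  assumes idem: "e * e = e" and coeffs: "\<And>i. e * coeff P i = coeff P i"
  shows "e * poly P x = poly P x" "poly P (e * x) = poly P x"
proof -
  show "e * poly P x = poly P x"
    unfolding poly_altdef sum_distrib_left
    by (rule sum.cong) (simp_all add: mult.assoc[symmetric] coeffs)
  have "coeff P i * (e * x) ^ i = coeff P i * x ^ i" for i
  proof (cases i)
    case (Suc k)
    have "(e * x) ^ i = e * x ^ i"
      by (simp only: power_mult_distrib Suc idempotent_power[OF idem])
    then have "coeff P i * (e * x) ^ i = (e * coeff P i) * x ^ i"
      by (simp add: ac_simps)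
    then show ?thesis
      by (simp add: coeffs)
  qed simp
  then show "poly P (e * x) = poly P x"
    unfolding poly_altdef by simp
qed

text \<open>Graphs of partial maps, ordered by inclusion, for the application of Zorn's lemma.\<close>

definition graph :: "'l set \<Rightarrow> ('l \<Rightarrow> 'b) \<Rightarrow> ('l \<times> 'b) set" where
  "graph F \<kappa> = {(x, \<kappa> x) |x. x \<in> F}"

lemma in_graph: "(x, b) \<in> graph F \<kappa> \<longleftrightarrow> x \<in> F \<and> b = \<kappa> x"
  unfolding graph_def by blast

lemma graph_subset_iff: "graph F' \<kappa>' \<subseteq> graph F \<kappa> \<longleftrightarrow> F' \<subseteq> F \<and> (\<forall>w\<in>F'. \<kappa>' w = \<kappa> w)"
  unfolding graph_def by blast

lemma chain_of_graphs_union: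
  assumes C: "C \<in> chains {graph F \<kappa> |F \<kappa>. P F \<kappa>}" and ne: "C \<noteq> {}"
  obtains F \<kappa> where "\<Union>C = graph F \<kappa>"
    and "\<And>x z. x \<in> F \<Longrightarrow> z \<in> F \<Longrightarrow>
           \<exists>F' \<kappa>'. P F' \<kappa>' \<and> x \<in> F' \<and> z \<in> F' \<and> F' \<subseteq> F \<and> (\<forall>w\<in>F'. \<kappa>' w = \<kappa> w)"
    and "\<exists>F' \<kappa>'. P F' \<kappa>' \<and> F' \<subseteq> F \<and> (\<forall>w\<in>F'. \<kappa>' w = \<kappa> w)"
proof -
  have member: "\<exists>F' \<kappa>'. P F' \<kappa>' \<and> X = graph F' \<kappa>'" if "X \<in> C" for X
    using that chainsD2[OF C] by blast
  have common: "\<exists>X\<in>C. p1 \<in> X \<and> p2 \<in> X" if "p1 \<in> \<Union>C" "p2 \<in> \<Union>C" for p1 p2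
    using that chainsD[OF C] by blast
  have functional: "b = b'" if xb: "(x, b) \<in> \<Union>C" "(x, b') \<in> \<Union>C" for x b b'
  proof -
    obtain X where X: "X \<in> C" "(x, b) \<in> X" "(x, b') \<in> X"
      using common[OF xb] by blast
    obtain F' \<kappa>' where "X = graph F' \<kappa>'"
      using member[OF X(1)] by blast
    then show ?thesis
      using X by (simp add: in_graph)
  qed
  define F where "F = fst ` \<Union>C"
  define \<kappa> where "\<kappa> x = (SOME b. (x, b) \<in> \<Union>C)" for x
  have in_union: "(x, \<kappa> x) \<in> \<Union>C" if x: "x \<in> F" for x
  proof -
    obtain b where "(x, b) \<in> \<Union>C"
      using x unfolding F_def by (metis imageE prod.collapse)
    then show ?thesis
      unfolding \<kappa>_def by (rule someI)
  qed
  have union: "\<Union>C = graph F \<kappa>"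
  proof
    show "\<Union>C \<subseteq> graph F \<kappa>"
    proof
      fix p assume p: "p \<in> \<Union>C"
      obtain x b where xb: "p = (x, b)"
        by (cases p)
      have "x \<in> F"
        unfolding F_def using p xb by force
      then show "p \<in> graph F \<kappa>"
        using functional[OF in_union p[unfolded xb]] xb by (simp add: in_graph)
    qed
    show "graph F \<kappa> \<subseteq> \<Union>C"
      using in_union by (auto simp: graph_def)
  qed
  have below: "F' \<subseteq> F \<and> (\<forall>w\<in>F'. \<kappa>' w = \<kappa> w)" if "graph F' \<kappa>' \<in> C" for F' \<kappa>'
    using Union_upper[OF that] unfolding union graph_subset_iff .
  show thesis
  proof (rule that[OF union])
    fix x z assume "x \<in> F" "z \<in> F"
    then obtain X where X: "X \<in> C" "(x, \<kappa> x) \<in> X" "(z, \<kappa> z) \<in> X"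
      using common[OF in_union in_union] by blast
    obtain F' \<kappa>' where F': "P F' \<kappa>'" "X = graph F' \<kappa>'"
      using member[OF X(1)] by blast
    then have "x \<in> F'" "z \<in> F'" "F' \<subseteq> F \<and> (\<forall>w\<in>F'. \<kappa>' w = \<kappa> w)"
      using X below by (auto simp: in_graph)
    then show "\<exists>F' \<kappa>'. P F' \<kappa>' \<and> x \<in> F' \<and> z \<in> F' \<and> F' \<subseteq> F \<and> (\<forall>w\<in>F'. \<kappa>' w = \<kappa> w)"
      using F'(1) by blast
  next
    obtain X where "X \<in> C"
      using ne by blast
    moreover obtain F' \<kappa>' where "P F' \<kappa>'" "X = graph F' \<kappa>'"
      using member[OF \<open>X \<in> C\<close>] by blast
    ultimately show "\<exists>F' \<kappa>'. P F' \<kappa>' \<and> F' \<subseteq> F \<and> (\<forall>w\<in>F'. \<kappa>' w = \<kappa> w)"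
      using below by blast
  qed
qed

locale embedding_extension =
  fixes \<phi> :: "'a::comm_ring_1 \<Rightarrow> 'l::field" and \<iota> :: "'a \<Rightarrow> 'b::comm_ring_1"
    and e :: 'b and M :: "'a set"
  assumes phi: "ring_hom \<phi>" and ker: "{a. \<phi> a = 0} = M"
    and alg: "\<And>y. \<exists>p. p \<noteq> 0 \<and> (\<forall>i. coeff p i \<in> range \<phi>) \<and> poly p y = 0"
    and M: "maximal_ideal M" and idem: "e * e = e"
    and kernel: "\<And>a. e * \<iota> a = 0 \<longleftrightarrow> a \<in> M" and iota: "ring_hom \<iota>"
    and root: "\<And>Q::'b poly. lead_coeff Q = 1 \<Longrightarrow> degree Q > 0 \<Longrightarrow> \<exists>x. e * poly Q x = 0"
begin

definition partial_emb :: "'l set \<Rightarrow> ('l \<Rightarrow> 'b) \<Rightarrow> bool" where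
  "partial_emb F \<kappa> \<longleftrightarrow> subfield F \<and> range \<phi> \<subseteq> F \<and>
     (\<forall>x\<in>F. \<forall>z\<in>F. \<kappa> (x + z) = \<kappa> x + \<kappa> z \<and> \<kappa> (x * z) = \<kappa> x * \<kappa> z) \<and>
     \<kappa> 1 = e \<and> (\<forall>x\<in>F. e * \<kappa> x = \<kappa> x) \<and> (\<forall>a. \<kappa> (\<phi> a) = e * \<iota> a)"

context
  fixes F \<kappa>
  assumes pe: "partial_emb F \<kappa>"
begin

lemma pe_subfield: "subfield F"
  using pe unfolding partial_emb_def by blast

lemma pe_range: "\<phi> a \<in> F"
  using pe unfolding partial_emb_def by blast

lemma pe_add: "x \<in> F \<Longrightarrow> z \<in> F \<Longrightarrow> \<kappa> (x + z) = \<kappa> x + \<kappa> z"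
  using pe unfolding partial_emb_def by blast

lemma pe_mult: "x \<in> F \<Longrightarrow> z \<in> F \<Longrightarrow> \<kappa> (x * z) = \<kappa> x * \<kappa> z"
  using pe unfolding partial_emb_def by blast

lemma pe_1: "\<kappa> 1 = e"
  using pe unfolding partial_emb_def by blast

lemma pe_absorb: "x \<in> F \<Longrightarrow> e * \<kappa> x = \<kappa> x"
  using pe unfolding partial_emb_def by blast

lemma pe_phi: "\<kappa> (\<phi> a) = e * \<iota> a"
  using pe unfolding partial_emb_def by blast

lemma pe_0: "\<kappa> 0 = 0"
  using pe_add[OF subfield_0[OF pe_subfield] subfield_0[OF pe_subfield]] by simp

lemma pe_sum: "(\<And>i. i \<in> S \<Longrightarrow> g i \<in> F) \<Longrightarrow> \<kappa> (sum g S) = (\<Sum>i\<in>S. \<kappa> (g i))"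
proof (induction S rule: infinite_finite_induct)
  case (insert x S)
  then have "\<kappa> (g x + sum g S) = \<kappa> (g x) + \<kappa> (sum g S)"
    by (intro pe_add subfield_sum[OF pe_subfield]) auto
  then show ?case
    using insert by simp
qed (simp_all add: pe_0)

lemma coeff_map_pe: "coeff (map_poly \<kappa> p) i = \<kappa> (coeff p i)"
  by (rule coeff_map_poly[where f=\<kappa>, OF pe_0])

lemma map_pe_add:
  "p \<in> polys_over F \<Longrightarrow> s \<in> polys_over F \<Longrightarrow> map_poly \<kappa> (p + s) = map_poly \<kappa> p + map_poly \<kappa> s"
  by (rule poly_eqI) (simp add: coeff_map_pe pe_add polys_over_coeff[OF pe_subfield])

lemma map_pe_mult:
  "p \<in> polys_over F \<Longrightarrow> s \<in> polys_over F \<Longrightarrow> map_poly \<kappa> (p * s) = map_poly \<kappa> p * map_poly \<kappa> s"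
  by (rule poly_eqI)
     (simp add: coeff_map_pe coeff_mult pe_sum pe_mult polys_over_coeff[OF pe_subfield]
                subfield_mult[OF pe_subfield])

lemma map_pe_const: "map_poly \<kappa> [:c:] = [:\<kappa> c:]"
  by (rule poly_eqI) (simp add: coeff_map_pe coeff_pCons pe_0 split: nat.split)

lemma map_pe_absorb: "p \<in> polys_over F \<Longrightarrow> e * coeff (map_poly \<kappa> p) i = coeff (map_poly \<kappa> p) i"
  by (simp add: coeff_map_pe pe_absorb polys_over_coeff[OF pe_subfield])

text \<open>The image \<open>\<kappa>(q)\<close> of a minimal polynomial has a root in \<open>e B\<close>: apply the root
  property to the monic polynomial \<open>\<kappa>(q) + (1 - e) X\<^sup>d\<close>.\<close>

lemma min_poly_image_root:
  assumes "min_poly F y q"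
  shows "\<exists>r. poly (map_poly \<kappa> q) r = 0"
proof -
  interpret min_poly F y q by (rule assms)
  let ?d = "degree q"
  define Q where "Q = map_poly \<kappa> q + monom (1 - e) ?d"
  have coeff_Q: "coeff Q i = \<kappa> (coeff q i) + (if i = ?d then 1 - e else 0)" for i
    by (simp add: Q_def coeff_map_pe coeff_monom)
  have lead: "lead_coeff Q = 1" and deg: "degree Q = ?d"
  proof -
    have top: "coeff Q ?d = 1"
      using coeff_Q[of ?d] q_monic pe_1 by simp
    moreover have "coeff Q i = 0" if "i > ?d" for i
      using coeff_Q[of i] that coeff_eq_0[OF that] pe_0 by simp
    ultimately show "degree Q = ?d"
      by (intro antisym degree_le le_degree) auto
    with top show "lead_coeff Q = 1"
      by simp
  qed
  obtain x where x: "e * poly Q x = 0"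
    using root[OF lead] q_degree deg by auto
  have "poly (map_poly \<kappa> q) (e * x) = e * poly (map_poly \<kappa> q) x"
    using poly_absorb[OF idem map_pe_absorb[OF q_over]] by simp
  also have "\<dots> = e * poly Q x - (e - e * e) * x ^ ?d"
    by (simp add: Q_def poly_monom algebra_simps)
  also have "\<dots> = 0"
    by (simp add: x idem)
  finally show ?thesis
    by blast
qed

text \<open>If \<open>r\<close> is a root of \<open>\<kappa>(q)\<close>, then every polynomial over \<open>F\<close> vanishing at \<open>y\<close> is
  mapped to one vanishing at \<open>r\<close> (reduce modulo \<open>q\<close>).\<close>

lemma min_poly_image_vanishes:
  assumes "min_poly F y q" and r: "poly (map_poly \<kappa> q) r = 0"
  shows "p \<in> polys_over F \<Longrightarrow> poly p y = 0 \<Longrightarrow> poly (map_poly \<kappa> p) r = 0"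
proof (induction "degree p" arbitrary: p rule: less_induct)
  case less
  interpret min_poly F y q by (rule assms(1))
  show ?case
  proof (cases "p = 0")
    case False
    then have le: "degree q \<le> degree p"
      using q_minimal less.prems by blast
    let ?m = "smult (lead_coeff p) (monom 1 (degree p - degree q))"
    define p' where "p' = p - smult (lead_coeff p) (monom 1 (degree p - degree q) * q)"
    have p': "p' \<in> polys_over F" "poly p' y = poly p y" "p' = 0 \<or> degree p' < degree p"
      using reduce_by_q[OF less.prems(1) le] unfolding p'_def by blast+
    have "poly (map_poly \<kappa> p') r = 0"
    proof (cases "p' = 0")
      case False
      then have "degree p' < degree p"
        using p'(3) by blast
      then show ?thesis
        using less.hyps p'(1,2) less.prems(2) by simp
    qed simp
    have m: "?m \<in> polys_over F"
      by (intro polys_over_smult polys_over_monom polys_over_lead[OF pe_subfield less.prems(1)]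
                pe_subfield subfield_1[OF pe_subfield])
    have "p = p' + ?m * q"
      unfolding p'_def by simp
    then have "map_poly \<kappa> p = map_poly \<kappa> p' + map_poly \<kappa> ?m * map_poly \<kappa> q"
      using map_pe_add[OF p'(1) polys_over_mult[OF pe_subfield m q_over]] map_pe_mult[OF m q_over]
      by simp
    then show ?thesis
      using \<open>poly (map_poly \<kappa> p') r = 0\<close> r by simp
  qed simp
qed

lemma min_poly_image_well_defined:
  assumes "min_poly F y q" and r: "poly (map_poly \<kappa> q) r = 0"
    and s: "s \<in> polys_over F" and t: "t \<in> polys_over F" and st: "poly s y = poly t y"
  shows "poly (map_poly \<kappa> s) r = poly (map_poly \<kappa> t) r"
proof -
  have diff: "s - t \<in> polys_over F"
    by (rule polys_over_diff[OF pe_subfield s t])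
  then have "poly (map_poly \<kappa> (s - t)) r = 0"
    using min_poly_image_vanishes[OF assms(1) r] st by simp
  moreover have "map_poly \<kappa> s = map_poly \<kappa> (s - t) + map_poly \<kappa> t"
    using map_pe_add[OF diff t] by simp
  ultimately show ?thesis
    by simp
qed

text \<open>A partial embedding extends to \<open>F[y]\<close>: send \<open>s(y) \<mapsto> \<kappa>(s)(r)\<close> for a root \<open>r\<close> of
  \<open>\<kappa>(q)\<close>; this is well defined by the previous lemma.\<close>

lemma partial_emb_extend:
  "\<exists>F' \<kappa>'. partial_emb F' \<kappa>' \<and> F \<subseteq> F' \<and> y \<in> F' \<and> (\<forall>x\<in>F. \<kappa>' x = \<kappa> x)"
proof -
  have sf: "subfield F"
    by (rule pe_subfield)
  obtain p0 where p0: "p0 \<noteq> 0" "\<forall>i. coeff p0 i \<in> range \<phi>" "poly p0 y = 0"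
    using alg by blast
  have "coeff p0 i \<in> F" for i
    using p0(2) pe_range by (metis rangeE)
  then have "p0 \<in> polys_over F"
    unfolding polys_over_def by blast
  then obtain q where "min_poly F y q"
    using min_poly_exists[OF sf _ p0(1,3)] by blast
  then interpret min_poly F y q .
  obtain r where r: "poly (map_poly \<kappa> q) r = 0"
    using min_poly_image_root[OF \<open>min_poly F y q\<close>] by blast
  define \<kappa>' where "\<kappa>' z = poly (map_poly \<kappa> (SOME s. s \<in> polys_over F \<and> poly s y = z)) r" for z
  have \<kappa>': "\<kappa>' (poly s y) = poly (map_poly \<kappa> s) r" if s: "s \<in> polys_over F" for s
  proof -
    let ?s = "SOME s'. s' \<in> polys_over F \<and> poly s' y = poly s y"
    have s': "?s \<in> polys_over F" "poly ?s y = poly s y"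
      using someI[of "\<lambda>s'. s' \<in> polys_over F \<and> poly s' y = poly s y" s] s by blast+
    show ?thesis
      unfolding \<kappa>'_def by (rule min_poly_image_well_defined[OF \<open>min_poly F y q\<close> r s'(1) s s'(2)])
  qed
  have on_F: "\<kappa>' c = \<kappa> c" if "c \<in> F" for c
    using \<kappa>'[OF polys_over_const[OF sf that]] by (simp add: map_pe_const)
  have "partial_emb adjoin \<kappa>'"
    unfolding partial_emb_def
  proof (intro conjI ballI allI)
    show "subfield adjoin"
      by (rule subfield_adjoin)
    show "range \<phi> \<subseteq> adjoin"
      using subset_adjoin pe_range by blast
    fix a b assume "a \<in> adjoin" "b \<in> adjoin"
    obtain s where s: "s \<in> polys_over F" "a = poly s y"
      using \<open>a \<in> adjoin\<close> by (rule adjoinE)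
    obtain t where t: "t \<in> polys_over F" "b = poly t y"
      using \<open>b \<in> adjoin\<close> by (rule adjoinE)
    note st = s(1) t(1) s(2) t(2)
    show "\<kappa>' (a + b) = \<kappa>' a + \<kappa>' b"
      using st \<kappa>'[OF polys_over_add[OF sf st(1,2)]] \<kappa>'[OF st(1)] \<kappa>'[OF st(2)] map_pe_add[OF st(1,2)]
      by simp
    show "\<kappa>' (a * b) = \<kappa>' a * \<kappa>' b"
      using st \<kappa>'[OF polys_over_mult[OF sf st(1,2)]] \<kappa>'[OF st(1)] \<kappa>'[OF st(2)] map_pe_mult[OF st(1,2)]
      by simp
  next
    show "\<kappa>' 1 = e"
      using on_F[OF subfield_1[OF sf]] pe_1 by simp
    fix a assume "a \<in> adjoin"
    then obtain s where s: "s \<in> polys_over F" "a = poly s y"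
      by (rule adjoinE)
    show "e * \<kappa>' a = \<kappa>' a"
      using s \<kappa>'[OF s(1)] poly_absorb(1)[OF idem map_pe_absorb[OF s(1)]] by simp
  next
    fix a
    show "\<kappa>' (\<phi> a) = e * \<iota> a"
      using on_F[OF pe_range] pe_phi by simp
  qed
  then show ?thesis
    using subset_adjoin in_adjoin on_F by blast
qed

end

lemma subfield_range_phi: "subfield (range \<phi>)"
  unfolding subfield_def
proof (intro conjI ballI)
  show "0 \<in> range \<phi>" "1 \<in> range \<phi>"
    by (metis ring_hom_0[OF phi] rangeI, metis ring_hom_1[OF phi] rangeI)
  fix x z assume "x \<in> range \<phi>" "z \<in> range \<phi>"
  then obtain a b where "x = \<phi> a" "z = \<phi> b"
    by blast
  then show "x + z \<in> range \<phi>" "x * z \<in> range \<phi>"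
    by (simp_all add: ring_hom_add[OF phi, symmetric] ring_hom_mult[OF phi, symmetric])
next
  fix x assume "x \<in> range \<phi>"
  then obtain a where a: "x = \<phi> a"
    by blast
  then show "- x \<in> range \<phi>"
    by (simp add: ring_hom_uminus[OF phi, symmetric])
  show "inverse x \<in> range \<phi>"
  proof (cases "x = 0")
    case True
    then show ?thesis
      by (metis inverse_zero ring_hom_0[OF phi] rangeI)
  next
    case False
    then have "a \<notin> M"
      using a ker by blast
    then obtain r where "1 - r * a \<in> M"
      using maximal_ideal_inverse[OF M] by blast
    then have "\<phi> (1 - r * a) = 0"
      using ker by blast
    then have "\<phi> r * x = 1"
      using a by (simp add: ring_hom_diff[OF phi] ring_hom_1[OF phi] ring_hom_mult[OF phi])
    then have "inverse x = \<phi> r"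
      by (metis inverse_unique mult.commute)
    then show ?thesis
      by simp
  qed
qed

text \<open>The starting point: \<open>\<phi>(a) \<mapsto> e \<iota>(a)\<close> is well defined on \<open>\<phi>(A)\<close> since both maps
  have kernel \<open>M\<close>.\<close>

lemma partial_emb_base: "\<exists>\<kappa>. partial_emb (range \<phi>) \<kappa>"
proof -
  define \<kappa> where "\<kappa> z = e * \<iota> (SOME a. \<phi> a = z)" for z
  have \<kappa>_phi: "\<kappa> (\<phi> a) = e * \<iota> a" for a
  proof -
    define a' where "a' = (SOME a'. \<phi> a' = \<phi> a)"
    have "\<phi> a' = \<phi> a"
      unfolding a'_def by (rule someI[of _ a]) simp
    then have "a' - a \<in> M"
      using ker by (auto simp: ring_hom_diff[OF phi])
    then have "e * \<iota> (a' - a) = 0"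
      using kernel by blast
    then have "e * \<iota> a' = e * \<iota> a"
      by (simp add: ring_hom_diff[OF iota] algebra_simps)
    then show ?thesis
      unfolding \<kappa>_def a'_def by simp
  qed
  have "subfield (range \<phi>)"
    by (rule subfield_range_phi)
  moreover have "\<kappa> (x * z) = \<kappa> x * \<kappa> z" if xz: "x \<in> range \<phi>" "z \<in> range \<phi>" for x z
  proof -
    obtain a b where ab: "x = \<phi> a" "z = \<phi> b"
      using xz by blast
    have "\<kappa> (x * z) = e * \<iota> (a * b)"
      using ab \<kappa>_phi by (simp add: ring_hom_mult[OF phi, symmetric])
    also have "\<dots> = (e * \<iota> a) * (e * \<iota> b)"
      by (simp add: ring_hom_mult[OF iota] ac_simps) (metis idem mult.assoc)
    finally show ?thesis
      using ab \<kappa>_phi by simp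
  qed
  moreover have "\<kappa> (x + z) = \<kappa> x + \<kappa> z" if xz: "x \<in> range \<phi>" "z \<in> range \<phi>" for x z
  proof -
    obtain a b where ab: "x = \<phi> a" "z = \<phi> b"
      using xz by blast
    then show ?thesis
      using \<kappa>_phi by (simp add: ring_hom_add[OF phi, symmetric] ring_hom_add[OF iota] distrib_left)
  qed
  moreover have "\<kappa> 1 = e"
    using \<kappa>_phi[of 1] by (simp add: ring_hom_1[OF phi] ring_hom_1[OF iota])
  moreover have "e * \<kappa> x = \<kappa> x" for x
    unfolding \<kappa>_def by (simp add: mult.assoc[symmetric] idem)
  ultimately have "partial_emb (range \<phi>) \<kappa>"
    unfolding partial_emb_def using \<kappa>_phi by blast
  then show ?thesis
    by blast
qed

text \<open>Partial embeddings are closed under unions of chains: all defining properties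
  involve at most two points.\<close>

lemma partial_emb_chain:
  assumes C: "C \<in> chains {graph F \<kappa> |F \<kappa>. partial_emb F \<kappa>}" and ne: "C \<noteq> {}"
  shows "\<exists>F \<kappa>. partial_emb F \<kappa> \<and> \<Union>C = graph F \<kappa>"
proof -
  obtain F \<kappa> where union: "\<Union>C = graph F \<kappa>"
    and two: "\<And>x z. x \<in> F \<Longrightarrow> z \<in> F \<Longrightarrow>
       \<exists>F' \<kappa>'. partial_emb F' \<kappa>' \<and> x \<in> F' \<and> z \<in> F' \<and> F' \<subseteq> F \<and> (\<forall>w\<in>F'. \<kappa>' w = \<kappa> w)"
    and some: "\<exists>F' \<kappa>'. partial_emb F' \<kappa>' \<and> F' \<subseteq> F \<and> (\<forall>w\<in>F'. \<kappa>' w = \<kappa> w)"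
    by (fact chain_of_graphs_union[OF C ne])
  obtain F0 \<kappa>0 where F0: "partial_emb F0 \<kappa>0" "F0 \<subseteq> F" "\<forall>w\<in>F0. \<kappa>0 w = \<kappa> w"
    using some by blast
  have "partial_emb F \<kappa>"
    unfolding partial_emb_def
  proof (intro conjI ballI allI)
    show "subfield F"
      unfolding subfield_def
    proof (intro conjI ballI)
      have "subfield F0"
        by (rule pe_subfield[OF F0(1)])
      then show "0 \<in> F" "1 \<in> F"
        using F0(2) subfield_0 subfield_1 by blast+
      fix x z assume "x \<in> F" "z \<in> F"
      then obtain F' \<kappa>' where P: "partial_emb F' \<kappa>'" "x \<in> F'" "z \<in> F'" "F' \<subseteq> F"
        using two by blast
      have "subfield F'"
        by (rule pe_subfield[OF P(1)])
      then show "x + z \<in> F" "x * z \<in> F"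
        using P(2-4) subfield_add subfield_mult by blast+
    next
      fix x assume "x \<in> F"
      then obtain F' \<kappa>' where P: "partial_emb F' \<kappa>'" "x \<in> F'" "F' \<subseteq> F"
        using two by blast
      have "subfield F'"
        by (rule pe_subfield[OF P(1)])
      then show "- x \<in> F" "inverse x \<in> F"
        using P(2,3) subfield_uminus subfield_inverse by blast+
    qed
    show "range \<phi> \<subseteq> F"
      using F0 pe_range by blast
    fix x z assume "x \<in> F" "z \<in> F"
    then obtain F' \<kappa>' where P: "partial_emb F' \<kappa>'" "x \<in> F'" "z \<in> F'" "F' \<subseteq> F" "\<forall>w\<in>F'. \<kappa>' w = \<kappa> w"
      using two by blast
    have "x + z \<in> F'" "x * z \<in> F'"
      using pe_subfield[OF P(1)] P(2,3) subfield_add subfield_mult by blast+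
    then show "\<kappa> (x + z) = \<kappa> x + \<kappa> z" "\<kappa> (x * z) = \<kappa> x * \<kappa> z"
      using P(2,3,5) pe_add[OF P(1) P(2,3)] pe_mult[OF P(1) P(2,3)] by simp_all
  next
    show "\<kappa> 1 = e"
      using F0(3) pe_1[OF F0(1)] subfield_1[OF pe_subfield[OF F0(1)]] by simp
    fix x assume "x \<in> F"
    then obtain F' \<kappa>' where P: "partial_emb F' \<kappa>'" "x \<in> F'" "\<forall>w\<in>F'. \<kappa>' w = \<kappa> w"
      using two by blast
    show "e * \<kappa> x = \<kappa> x"
      using P(2,3) pe_absorb[OF P(1) P(2)] by simp
  next
    fix a show "\<kappa> (\<phi> a) = e * \<iota> a"
      using F0(3) pe_phi[OF F0(1)] pe_range[OF F0(1)] by simp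
  qed
  with union show ?thesis
    by blast
qed

theorem total_partial_emb: "\<exists>\<kappa>. partial_emb UNIV \<kappa>"
proof -
  let ?S = "{graph F \<kappa> |F \<kappa>. partial_emb F \<kappa>}"
  have "\<exists>G\<in>?S. \<forall>X\<in>?S. G \<subseteq> X \<longrightarrow> X = G"
  proof (rule Zorn_Lemma2, intro ballI)
    fix C assume C: "C \<in> chains ?S"
    show "\<exists>U\<in>?S. \<forall>X\<in>C. X \<subseteq> U"
    proof (cases "C = {}")
      case True
      obtain \<kappa> where "partial_emb (range \<phi>) \<kappa>"
        using partial_emb_base by blast
      then show ?thesis
        using True by blast
    next
      case False
      obtain F \<kappa> where "partial_emb F \<kappa>" "\<Union>C = graph F \<kappa>"
        using partial_emb_chain[OF C False] by blast
      then have "graph F \<kappa> \<in> ?S" "\<forall>X\<in>C. X \<subseteq> graph F \<kappa>"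
        by auto
      then show ?thesis
        by blast
    qed
  qed
  then obtain F \<kappa> where pe: "partial_emb F \<kappa>"
    and max: "\<forall>X\<in>?S. graph F \<kappa> \<subseteq> X \<longrightarrow> X = graph F \<kappa>"
    by blast
  have "y \<in> F" for y
  proof -
    obtain F' \<kappa>' where E: "partial_emb F' \<kappa>'" "F \<subseteq> F'" "y \<in> F'" "\<forall>x\<in>F. \<kappa>' x = \<kappa> x"
      using partial_emb_extend[OF pe] by blast
    then have "graph F \<kappa> \<subseteq> graph F' \<kappa>'"
      by (simp add: graph_subset_iff)
    moreover have "graph F' \<kappa>' \<in> ?S"
      using E(1) by blast
    ultimately have "graph F' \<kappa>' = graph F \<kappa>"
      using max by blast
    moreover have "(y, \<kappa>' y) \<in> graph F' \<kappa>'"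
      using E(3) by (simp add: in_graph)
    ultimately show "y \<in> F"
      by (simp add: in_graph)
  qed
  then have "F = UNIV"
    by blast
  then show ?thesis
    using pe by blast
qed

end


section \<open>The difference embedding \<open>Fun L \<rightarrow> B\<close>\<close>

text \<open>Given a splitting idempotent \<open>e\<close> and an embedding \<open>\<kappa>: L \<rightarrow> e B\<close>, the map
  \<open>f \<mapsto> \<Sum>\<^sub>\<sigma> \<sigma>(\<kappa>(f(\<sigma>)))\<close> realises \<open>Fun L \<subseteq> Fun (e B) \<cong> B\<close>.\<close>

definition spread :: "('s::finite \<Rightarrow> 'b::comm_ring_1 \<Rightarrow> 'b) \<Rightarrow> ('l \<Rightarrow> 'b) \<Rightarrow> ('s \<Rightarrow> 'l) \<Rightarrow> 'b" where
  "spread act \<kappa> f = (\<Sum>\<sigma>\<in>UNIV. act \<sigma> (\<kappa> (f \<sigma>)))"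

context
  fixes act :: "'s::{group_add,finite} \<Rightarrow> 'b::comm_ring_1 \<Rightarrow> 'b" and e :: 'b
    and \<kappa> :: "'l::field \<Rightarrow> 'b"
  assumes dr: "difference_ring act" and split: "splitting_idempotent act e"
    and emb_add: "\<And>x z. \<kappa> (x + z) = \<kappa> x + \<kappa> z" and emb_mult: "\<And>x z. \<kappa> (x * z) = \<kappa> x * \<kappa> z"
    and emb_1: "\<kappa> 1 = e"
begin

lemma emb_component: "act \<sigma> (\<kappa> x) = act \<sigma> e * act \<sigma> (\<kappa> x)"
  by (metis emb_1 emb_mult mult_1_left ring_hom_mult[OF diff_ring_hom[OF dr]])

lemma emb_cross: "\<sigma> \<noteq> \<tau> \<Longrightarrow> act \<sigma> (\<kappa> x) * act \<tau> (\<kappa> z) = 0"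
proof -
  assume "\<sigma> \<noteq> \<tau>"
  have "act \<sigma> (\<kappa> x) * act \<tau> (\<kappa> z) = (act \<sigma> e * act \<tau> e) * (act \<sigma> (\<kappa> x) * act \<tau> (\<kappa> z))"
    by (subst emb_component[of \<sigma>], subst emb_component[of \<tau>]) (simp add: ac_simps)
  then show ?thesis
    using splitting_orthogonal[OF split \<open>\<sigma> \<noteq> \<tau>\<close>] by simp
qed

lemma emb_eq_0_iff: "\<kappa> x = 0 \<longleftrightarrow> x = 0"
proof
  assume "\<kappa> x = 0"
  show "x = 0"
  proof (rule ccontr)
    assume "x \<noteq> 0"
    then have "\<kappa> 1 = \<kappa> x * \<kappa> (inverse x)"
      by (simp flip: emb_mult)
    then show False
      using \<open>\<kappa> x = 0\<close> emb_1 splitting_nonzero[OF split] by simp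
  qed
next
  assume "x = 0"
  then show "\<kappa> x = 0"
    using emb_add[of 0 0] by simp
qed

lemma spread_ring_hom: "ring_hom (spread act \<kappa>)"
proof -
  have "spread act \<kappa> f * spread act \<kappa> g = spread act \<kappa> (f * g)" for f g :: "'s \<Rightarrow> 'l"
  proof -
    have "spread act \<kappa> f * spread act \<kappa> g =
          (\<Sum>\<sigma>\<in>UNIV. \<Sum>\<tau>\<in>UNIV. act \<sigma> (\<kappa> (f \<sigma>)) * act \<tau> (\<kappa> (g \<tau>)))"
      by (simp add: spread_def sum_product)
    also have "\<dots> = (\<Sum>\<sigma>\<in>UNIV. act \<sigma> (\<kappa> (f \<sigma>)) * act \<sigma> (\<kappa> (g \<sigma>)))"
      by (intro sum.cong refl sum_single_nonzero) (simp add: emb_cross)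
    also have "\<dots> = spread act \<kappa> (f * g)"
      by (simp add: spread_def emb_mult ring_hom_mult[OF diff_ring_hom[OF dr]])
    finally show ?thesis .
  qed
  moreover have "spread act \<kappa> (f + g) = spread act \<kappa> f + spread act \<kappa> g" for f g :: "'s \<Rightarrow> 'l"
    by (simp add: spread_def emb_add ring_hom_add[OF diff_ring_hom[OF dr]] sum.distrib)
  moreover have "spread act \<kappa> 1 = 1"
    by (simp add: spread_def emb_1 splitting_sum[OF split])
  ultimately show ?thesis
    unfolding ring_hom_def by simp
qed

lemma spread_commute: "spread act \<kappa> (fun_act \<tau> f) = act \<tau> (spread act \<kappa> f)"
proof -
  have "spread act \<kappa> (fun_act \<tau> f) = (\<Sum>\<rho>\<in>UNIV. act (\<tau> + \<rho>) (\<kappa> (f (- \<tau> + (\<tau> + \<rho>)))))"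
    using sum_translate[where \<tau>=\<tau> and g="\<lambda>\<sigma>. act \<sigma> (\<kappa> (f (- \<tau> + \<sigma>)))"]
    by (simp add: spread_def fun_act_def)
  also have "\<dots> = act \<tau> (spread act \<kappa> f)"
    by (simp add: spread_def ring_hom_sum[OF diff_ring_hom[OF dr]] diff_ring_add[OF dr] add.assoc[symmetric])
  finally show ?thesis .
qed

text \<open>Multiplying by \<open>\<sigma>(e)\<close> recovers the \<open>\<sigma>\<close>-th term; hence the spread is injective.\<close>

lemma spread_component: "act \<sigma> e * spread act \<kappa> f = act \<sigma> (\<kappa> (f \<sigma>))"
proof -
  have "act \<sigma> e * spread act \<kappa> f = (\<Sum>\<rho>\<in>UNIV. act \<sigma> (\<kappa> 1) * act \<rho> (\<kappa> (f \<rho>)))"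
    by (simp add: spread_def sum_distrib_left emb_1)
  also have "\<dots> = act \<sigma> (\<kappa> 1) * act \<sigma> (\<kappa> (f \<sigma>))"
    by (rule sum_single_nonzero) (simp add: emb_cross)
  also have "\<dots> = act \<sigma> (\<kappa> (f \<sigma>))"
    using emb_component[of \<sigma>] by (simp add: emb_1)
  finally show ?thesis .
qed

lemma spread_inj: "inj (spread act \<kappa>)"
proof (rule injI)
  fix f g :: "'s \<Rightarrow> 'l"
  assume eq: "spread act \<kappa> f = spread act \<kappa> g"
  have "\<kappa> (f \<sigma>) = \<kappa> (g \<sigma>)" for \<sigma>
    using spread_component[of \<sigma> f] spread_component[of \<sigma> g] eq
    by (metis diff_ring_inv_left[OF dr])
  then have "\<kappa> (f \<sigma> - g \<sigma>) = 0" for \<sigma>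
    using emb_add[of "f \<sigma> - g \<sigma>" "g \<sigma>"] by simp
  then show "f = g"
    by (auto simp: emb_eq_0_iff)
qed

text \<open>If \<open>\<kappa>\<close> extends \<open>\<phi>(a) \<mapsto> e \<iota>(a)\<close>, the spread extends \<open>\<iota>\<close> along the Taylor
  homomorphism, since the translates of \<open>e\<close> sum to \<open>1\<close>.\<close>

lemma spread_taylor:
  assumes drA: "difference_ring actA" and dh: "difference_hom actA act \<iota>"
    and emb_phi: "\<And>a. \<kappa> (\<phi> a) = e * \<iota> a"
  shows "spread act \<kappa> (taylor actA \<phi> a) = \<iota> a"
proof -
  have "spread act \<kappa> (taylor actA \<phi> a) = (\<Sum>\<sigma>\<in>UNIV. act \<sigma> e * act \<sigma> (\<iota> (actA (- \<sigma>) a)))"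
    by (simp add: spread_def taylor_def emb_phi ring_hom_mult[OF diff_ring_hom[OF dr]])
  also have "\<dots> = (\<Sum>\<sigma>\<in>UNIV. act \<sigma> e) * \<iota> a"
    by (simp add: diff_hom_commute[OF dh, symmetric] diff_ring_inv_right[OF drA] sum_distrib_right)
  finally show ?thesis
    by (simp add: splitting_sum[OF split])
qed

end


theorem proposition4p15:
  fixes actA :: "'s::{group_add,finite} \<Rightarrow> 'a::comm_ring_1 \<Rightarrow> 'a"
    and actB :: "'s \<Rightarrow> 'b::comm_ring_1 \<Rightarrow> 'b"
    and M :: "'a set"
    and \<phi> :: "'a \<Rightarrow> 'l::field"
    and \<iota> :: "'a \<Rightarrow> 'b"
  assumes "pseudofield actA"
    and "maximal_ideal M"
    and "algebraic_closure_of_quotient \<phi> M"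
    and "difference_closed actB"
    and "difference_hom actA actB \<iota>" and "inj \<iota>"
  shows "\<exists>e :: ('s \<Rightarrow> 'l) \<Rightarrow> 'b. difference_hom fun_act actB e \<and> inj e \<and>
           (\<forall>a. e (taylor actA \<phi> a) = \<iota> a)"
proof -
  note pfA = assms(1) and M = assms(2) and dc = assms(4) and dh = assms(5)
  have drA: "difference_ring actA" and drB: "difference_ring actB"
    using pfA dc by (simp_all add: pseudofield_diff_ring difference_closed_def)
  obtain e where split: "splitting_idempotent actB e" and kernel: "\<forall>a. e * \<iota> a = 0 \<longleftrightarrow> a \<in> M"
    using adapted_splitting_idempotent[OF pfA M dc dh] by blast
  interpret embedding_extension \<phi> \<iota> e M
    using assms(3) M splitting_idem[OF split] kernel diff_hom_ring_hom[OF dh]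
      splitting_idempotent_root[OF dc split]
    by unfold_locales (auto simp: algebraic_closure_of_quotient_def)
  obtain \<kappa> where \<kappa>: "partial_emb UNIV \<kappa>"
    using total_partial_emb by blast
  note emb = drB split pe_add[OF \<kappa> UNIV_I UNIV_I] pe_mult[OF \<kappa> UNIV_I UNIV_I] pe_1[OF \<kappa>]
  have "difference_hom fun_act actB (spread actB \<kappa>)"
    unfolding difference_hom_def using spread_ring_hom[OF emb] spread_commute[OF emb] by blast
  moreover have "inj (spread actB \<kappa>)"
    using spread_inj[OF emb] .
  moreover have "spread actB \<kappa> (taylor actA \<phi> a) = \<iota> a" for a
    using spread_taylor[OF emb drA dh pe_phi[OF \<kappa>]] .
  ultimately show ?thesis
    by blast
qed

end
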